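(* Let $N\geq2$ be even and let $r,s$ be even non-negative integers. Then $$[W^{0,r}_0,W^{+,s}_0]=-8W^{+,r+s+2}_0+8W^{+,r+s}_0,\qquad [W^{0,r}_0,W^{-,s}_0]=8W^{-,r+s+2}_0-8W^{-,r+s}_0,$$ $$[W^{+,r}_0,W^{-,s}_0]=4W^{0,r+s+2}_0-4W^{0,r+s}_0.$$
   Context: On $\mathcal{H}_N=(\mathbb{C}^2)^{\otimes N}$ ($N$ even) let $c_j^\dagger=i^{j-1}\,i^{\sigma^z_1+\dots+\sigma^z_{j-1}}\sigma^+_j$, $c_j=i^{-j+1}\,i^{-\sigma^z_1-\dots-\sigma^z_{j-1}}\sigma^-_j$ (Jordan–Wigner fermions). For $k=1,\dots,N-1$ let $A_k(j)=\tfrac12(1+ie^{-i\pi k/N})e^{i\pi kj/N}-\tfrac12(1+ie^{i\pi k/N})e^{-i\pi kj/N}$, $\theta_k^\dagger=\sum_jA_k(j)c_j^\dagger$, $\theta_k=-i\sum_jA_k(j)c_j$; for $-\tfrac N2+1\leq n\leq\tfrac N2-1$, $n\neq0$, $\eta^+_n=\sqrt{\tfrac{n}{N\sin(\pi n/N)}}\theta^\dagger_{N/2+n}$, $\eta^-_n=\sqrt{\tfrac{n}{N\sin(\pi n/N)}}\theta_{N/2-n}$, and $\eta^+_0=\theta^\dagger_{N/2}/\sqrt\pi$, $\eta^-_0=\theta_{N/2}/\sqrt\pi$. Convention: $\frac{\sin(\pi j/N)}{j}\big|_{j=0}=\frac{\pi}{N}$. For $r\geq0$ let $U_{r}(j_1,j_2)=\sin\bigl(\pi\tfrac{j_1-j_2}{2N}\bigr)\cos^r\bigl(\pi\tfrac{j_1-j_2}{2N}\bigr)\bigl((-1)^r+1\bigr)\delta_{j_1+j_2,0}+2\cos\bigl(\pi\tfrac{j_1+j_2}{2N}\bigr)\sin^r\bigl(\pi\tfrac{j_1+j_2}{2N}\bigr)\bigl(1+(-1)^r\bigr)\delta_{j_1-j_2,-N}$,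 and with $S(j_1,j_2)=\sqrt{\tfrac{\sin(\pi j_1/N)}{j_1}}\sqrt{\tfrac{\sin(\pi j_2/N)}{j_2}}$ and all sums over $-\tfrac N2+1\leq j_1,j_2\leq\tfrac N2-1$ define $W^{+,r}_0=\sum S(j_1,j_2)U_r(j_1,j_2)\eta^+_{j_1}\eta^+_{j_2}$, $W^{-,r}_0=\sum S(j_1,j_2)U_r(j_1,j_2)\eta^-_{j_1}\eta^-_{j_2}$, $W^{0,r}_0=\sum S(j_1,j_2)U_r(j_1,j_2)(\eta^+_{j_1}\eta^-_{j_2}+\eta^-_{j_1}\eta^+_{j_2})$. *)

theory Defs
  imports Complex_Main "Jordan_Normal_Form.Matrix"
begin

(* Hilbert space H_N = (C^2)^{\<otimes>N} with computational basis |a>, a < 2^N.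
   Site j (1 \<le> j \<le> N) corresponds to bit (j-1) of a; bit set = spin up (sigma^z = +1). *)

definition dimH :: "nat \<Rightarrow> nat" where
  "dimH N = 2 ^ N"

definition sz_val :: "nat \<Rightarrow> nat \<Rightarrow> int" where
  "sz_val a j = (if bit a (j - 1) then 1 else -1)"

definition sigma_plus :: "nat \<Rightarrow> nat \<Rightarrow> complex mat" where
  "sigma_plus N j = mat (dimH N) (dimH N)
     (\<lambda>(a, b). if \<not> bit b (j - 1) \<and> a = b + 2 ^ (j - 1) then 1 else 0)"

definition sigma_minus :: "nat \<Rightarrow> nat \<Rightarrow> complex mat" where
  "sigma_minus N j = mat (dimH N) (dimH N)
     (\<lambda>(a, b). if bit b (j - 1) \<and> a + 2 ^ (j - 1) = b then 1 else 0)"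

definition jw_string :: "int \<Rightarrow> nat \<Rightarrow> nat \<Rightarrow> complex mat" where
  "jw_string eps N j = mat (dimH N) (dimH N)
     (\<lambda>(a, b). if a = b then \<i> powi (eps * (\<Sum>l\<in>{1..<j}. sz_val a l)) else 0)"

definition cdag :: "nat \<Rightarrow> nat \<Rightarrow> complex mat" where
  "cdag N j = (\<i> powi (int j - 1)) \<cdot>\<^sub>m (jw_string 1 N j * sigma_plus N j)"

definition cann :: "nat \<Rightarrow> nat \<Rightarrow> complex mat" where
  "cann N j = (\<i> powi (- int j + 1)) \<cdot>\<^sub>m (jw_string (-1) N j * sigma_minus N j)"

definition msum :: "nat \<Rightarrow> 'i set \<Rightarrow> ('i \<Rightarrow> complex mat) \<Rightarrow> complex mat" where
  "msum N S f = mat (dimH N) (dimH N) (\<lambda>ij. \<Sum>x\<in>S. f x $$ ij)"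

definition Acoef :: "nat \<Rightarrow> nat \<Rightarrow> nat \<Rightarrow> complex" where
  "Acoef N k j =
     (1/2) * (1 + \<i> * cis (- pi * k / N)) * cis (pi * k * j / N)
   - (1/2) * (1 + \<i> * cis (pi * k / N)) * cis (- pi * k * j / N)"

definition thetadag :: "nat \<Rightarrow> nat \<Rightarrow> complex mat" where
  "thetadag N k = msum N {1..N} (\<lambda>j. Acoef N k j \<cdot>\<^sub>m cdag N j)"

definition theta :: "nat \<Rightarrow> nat \<Rightarrow> complex mat" where
  "theta N k = (- \<i>) \<cdot>\<^sub>m msum N {1..N} (\<lambda>j. Acoef N k j \<cdot>\<^sub>m cann N j)"

definition eta_p :: "nat \<Rightarrow> int \<Rightarrow> complex mat" where
  "eta_p N n = (if n = 0 then complex_of_real (1 / sqrt pi) \<cdot>\<^sub>m thetadag N (N div 2)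
     else complex_of_real (sqrt (n / (N * sin (pi * n / N)))) \<cdot>\<^sub>m thetadag N (nat (int (N div 2) + n)))"

definition eta_m :: "nat \<Rightarrow> int \<Rightarrow> complex mat" where
  "eta_m N n = (if n = 0 then complex_of_real (1 / sqrt pi) \<cdot>\<^sub>m theta N (N div 2)
     else complex_of_real (sqrt (n / (N * sin (pi * n / N)))) \<cdot>\<^sub>m theta N (nat (int (N div 2) - n)))"

definition sinc_fac :: "nat \<Rightarrow> int \<Rightarrow> real" where
  "sinc_fac N j = (if j = 0 then pi / N else sin (pi * j / N) / j)"

definition Sfac :: "nat \<Rightarrow> int \<Rightarrow> int \<Rightarrow> real" where
  "Sfac N j1 j2 = sqrt (sinc_fac N j1) * sqrt (sinc_fac N j2)"

definition Ucoef :: "nat \<Rightarrow> nat \<Rightarrow> int \<Rightarrow> int \<Rightarrow> real" where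
  "Ucoef N r j1 j2 =
     sin (pi * (j1 - j2) / (2 * N)) * cos (pi * (j1 - j2) / (2 * N)) ^ r * ((-1) ^ r + 1)
       * (if j1 + j2 = 0 then 1 else 0)
   + 2 * cos (pi * (j1 + j2) / (2 * N)) * sin (pi * (j1 + j2) / (2 * N)) ^ r * (1 + (-1) ^ r)
       * (if j1 - j2 = - int N then 1 else 0)"

definition mode_range :: "nat \<Rightarrow> int set" where
  "mode_range N = {- int (N div 2) + 1 .. int (N div 2) - 1}"

definition W_plus :: "nat \<Rightarrow> nat \<Rightarrow> complex mat" where
  "W_plus N r = msum N (mode_range N \<times> mode_range N)
     (\<lambda>(j1, j2). complex_of_real (Sfac N j1 j2 * Ucoef N r j1 j2) \<cdot>\<^sub>m (eta_p N j1 * eta_p N j2))"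

definition W_minus :: "nat \<Rightarrow> nat \<Rightarrow> complex mat" where
  "W_minus N r = msum N (mode_range N \<times> mode_range N)
     (\<lambda>(j1, j2). complex_of_real (Sfac N j1 j2 * Ucoef N r j1 j2) \<cdot>\<^sub>m (eta_m N j1 * eta_m N j2))"

definition W_zero :: "nat \<Rightarrow> nat \<Rightarrow> complex mat" where
  "W_zero N r = msum N (mode_range N \<times> mode_range N)
     (\<lambda>(j1, j2). complex_of_real (Sfac N j1 j2 * Ucoef N r j1 j2) \<cdot>\<^sub>m
        (eta_p N j1 * eta_m N j2 + eta_m N j1 * eta_p N j2))"

definition commutator :: "complex mat \<Rightarrow> complex mat \<Rightarrow> complex mat" where
  "commutator A B = A * B - B * A"

end

theory Submission
  imports Defs
begin

(* The proof follows the paper; the file is organised bottom-up.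
   - Operators on H_N are (2^N x 2^N)-matrices, 'msum' is their entrywise finite sum; products and
     (anti)commutators are bilinear in msum, and double sums against a Kronecker delta collapse.
   - The Jordan-Wigner operators are monomial matrices (one weighted entry per column); multiplying
     them gives the canonical anticommutation relations {c_j, c_k^dag} = delta_jk, {c,c} = {c^dag,c^dag} = 0.
   - By bilinearity {theta_l, theta_k^dag} is -i times a Gram sum of the mode functions A_k(j), which
     geometric series evaluate to -N cos(pi l/N) delta_lk.  With the normalisation of eta this yields
     {eta^-_j, eta^+_k} = -j delta_{j+k,0}, all other anticommutators vanishing.
   - [AB, CD] = A{B,C}D - AC{B,D} + {A,C}DB - C{A,D}B turns the commutator of two quadratic forms
     sum_j c_j X_j Y_{-j} in the eta modes into a combination of such forms.
   - On the mode range only the diagonal j2 = -j1 of U_r survives, so each W is a quadratic form with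
     the odd weight w_r(j) = 2 sinc(j) sin(pi j/N) cos^r(pi j/N); finally
     j w_r(j) w_s(j) = 2 (w_{r+s}(j) - w_{r+s+2}(j)) (from sin^2 = 1 - cos^2) gives the three relations. *)

abbreviation Ops :: "nat \<Rightarrow> complex mat set" where
  "Ops N \<equiv> carrier_mat (dimH N) (dimH N)"

definition anticomm :: "complex mat \<Rightarrow> complex mat \<Rightarrow> complex mat" where
  "anticomm A B = A * B + B * A"

lemma mult_index:
  assumes "A \<in> carrier_mat n n" "B \<in> carrier_mat n n" "i < n" "j < n"
  shows "(A * B) $$ (i,j) = (\<Sum>l<n. A $$ (i,l) * B $$ (l,j))"
  using assms by (simp add: scalar_prod_def atLeast0LessThan row_def col_def)

lemma smult_smult_mat: "a \<cdot>\<^sub>m (b \<cdot>\<^sub>m (A::complex mat)) = (a * b) \<cdot>\<^sub>m A"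
  by (rule eq_matI) auto

lemma smult_mult_Ops:
  assumes "A \<in> Ops N" "B \<in> Ops N"
  shows "(a \<cdot>\<^sub>m A) * B = (a::complex) \<cdot>\<^sub>m (A * B)" "A * (a \<cdot>\<^sub>m B) = a \<cdot>\<^sub>m (A * B)"
  using assms by (rule mult_smult_assoc_mat, rule mult_smult_distrib)

lemma mult_Ops[simp]: "A \<in> Ops N \<Longrightarrow> B \<in> Ops N \<Longrightarrow> A * B \<in> Ops N"
  by (rule mult_carrier_mat)

lemma zero_smult_mat: "M \<in> carrier_mat n m \<Longrightarrow> (0::complex) \<cdot>\<^sub>m M = 0\<^sub>m n m"
  by (intro eq_matI) auto

lemma zero_smult_one[simp]: "(0::complex) \<cdot>\<^sub>m 1\<^sub>m n = 0\<^sub>m n n"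
  by (intro eq_matI) auto

lemma minus_zero_mat[simp]: "A \<in> carrier_mat n m \<Longrightarrow> A - 0\<^sub>m n m = (A :: complex mat)"
  by (intro eq_matI) auto

lemma zero_minus_zero_mat[simp]: "0\<^sub>m n m - 0\<^sub>m n m = (0\<^sub>m n m :: complex mat)"
  by (intro eq_matI) auto

lemma add_diff_assoc_mat:
  "A \<in> carrier_mat n m \<Longrightarrow> B \<in> carrier_mat n m \<Longrightarrow> C \<in> carrier_mat n m \<Longrightarrow>
   A + B - C = A + (B - (C :: complex mat))"
  by (intro eq_matI) auto

lemma commutator_add_left:
  assumes "A \<in> Ops N" "B \<in> Ops N" "C \<in> Ops N"
  shows "commutator (A + B) C = commutator A C + commutator B C"
  unfolding commutator_def using assms
  by (simp add: add_mult_distrib_mat[of _ "dimH N" "dimH N"] mult_add_distrib_mat[of _ "dimH N" "dimH N"])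
     (intro eq_matI, auto)

lemma anticomm_smult_left:
  assumes "X \<in> Ops N" "Y \<in> Ops N"
  shows "anticomm (a \<cdot>\<^sub>m X) Y = a \<cdot>\<^sub>m anticomm X Y"
  using assms unfolding anticomm_def
  by (simp add: smult_mult_Ops[where N=N] add_smult_distrib_left_mat[of "X * Y" "dimH N" "dimH N" "Y * X", symmetric])

lemma anticomm_smult:
  assumes "X \<in> Ops N" "Y \<in> Ops N"
  shows "anticomm (a \<cdot>\<^sub>m X) (b \<cdot>\<^sub>m Y) = (a * b) \<cdot>\<^sub>m anticomm X Y"
  using assms unfolding anticomm_def
  by (simp add: smult_mult_Ops[where N=N] smult_smult_mat mult.commute
      add_smult_distrib_left_mat[of "X * Y" "dimH N" "dimH N" "Y * X", symmetric])

lemma anticomm_sym: "X \<in> Ops N \<Longrightarrow> Y \<in> Ops N \<Longrightarrow> anticomm X Y = anticomm Y X"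
  unfolding anticomm_def by (rule comm_add_mat) auto

lemma msum_carrier[simp]: "msum N S f \<in> Ops N"
  by (simp add: msum_def)

lemma dim_msum[simp]: "dim_row (msum N S f) = dimH N" "dim_col (msum N S f) = dimH N"
  by (simp_all add: msum_def)

lemma msum_index[simp]:
  "i < dimH N \<Longrightarrow> j < dimH N \<Longrightarrow> msum N S f $$ (i,j) = (\<Sum>x\<in>S. f x $$ (i,j))"
  by (simp add: msum_def)

lemma msum_cong:
  "S = T \<Longrightarrow> (\<And>x. x \<in> T \<Longrightarrow> f x = g x) \<Longrightarrow> msum N S f = msum N T g"
  unfolding msum_def by (auto intro!: sum.cong)

lemma msum_zero:
  assumes "\<And>x. x \<in> S \<Longrightarrow> f x = 0\<^sub>m (dimH N) (dimH N)"
  shows "msum N S f = 0\<^sub>m (dimH N) (dimH N)"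
  using assms by (intro eq_matI) auto

lemma msum_add:
  assumes "\<And>x. x \<in> S \<Longrightarrow> f x \<in> Ops N" "\<And>x. x \<in> S \<Longrightarrow> g x \<in> Ops N"
  shows "msum N S f + msum N S g = msum N S (\<lambda>x. f x + g x)"
proof (intro eq_matI)
  fix i j assume "i < dim_row (msum N S (\<lambda>x. f x + g x))" "j < dim_col (msum N S (\<lambda>x. f x + g x))"
  then show "(msum N S f + msum N S g) $$ (i, j) = msum N S (\<lambda>x. f x + g x) $$ (i, j)"
    using assms by (auto simp: sum.distrib[symmetric] intro!: sum.cong)
      (metis carrier_matD index_add_mat(1))
qed auto

lemma msum_minus:
  assumes "\<And>x. x \<in> S \<Longrightarrow> f x \<in> Ops N" "\<And>x. x \<in> S \<Longrightarrow> g x \<in> Ops N"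
  shows "msum N S f - msum N S g = msum N S (\<lambda>x. f x - g x)"
proof (intro eq_matI)
  fix i j assume "i < dim_row (msum N S (\<lambda>x. f x - g x))" "j < dim_col (msum N S (\<lambda>x. f x - g x))"
  then show "(msum N S f - msum N S g) $$ (i, j) = msum N S (\<lambda>x. f x - g x) $$ (i, j)"
    using assms by (auto simp: sum_subtractf[symmetric] intro!: sum.cong)
      (metis carrier_matD index_minus_mat(1))
qed auto

lemma msum_smult:
  assumes "\<And>x. x \<in> S \<Longrightarrow> f x \<in> Ops N"
  shows "c \<cdot>\<^sub>m msum N S f = msum N S (\<lambda>x. c \<cdot>\<^sub>m f x)"
proof (intro eq_matI)
  fix i j assume "i < dim_row (msum N S (\<lambda>x. c \<cdot>\<^sub>m f x))" "j < dim_col (msum N S (\<lambda>x. c \<cdot>\<^sub>m f x))"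
  then show "(c \<cdot>\<^sub>m msum N S f) $$ (i, j) = msum N S (\<lambda>x. c \<cdot>\<^sub>m f x) $$ (i, j)"
    using assms by (auto simp: sum_distrib_left intro!: sum.cong)
      (metis carrier_matD index_smult_mat(1))
qed auto

lemma msum_alternating4:
  assumes "\<And>x. x \<in> S \<Longrightarrow> f1 x \<in> Ops N \<and> f2 x \<in> Ops N \<and> f3 x \<in> Ops N \<and> f4 x \<in> Ops N"
  shows "msum N S (\<lambda>x. f1 x - f2 x + f3 x - f4 x)
       = msum N S f1 - msum N S f2 + msum N S f3 - msum N S f4"
proof (intro eq_matI)
  fix i l assume "i < dim_row (msum N S f1 - msum N S f2 + msum N S f3 - msum N S f4)"
    "l < dim_col (msum N S f1 - msum N S f2 + msum N S f3 - msum N S f4)"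
  then have il: "i < dimH N" "l < dimH N" by auto
  have "(f1 x - f2 x + f3 x - f4 x) $$ (i,l) = f1 x $$ (i,l) - f2 x $$ (i,l) + f3 x $$ (i,l) - f4 x $$ (i,l)"
    if "x \<in> S" for x
    using assms[OF that] il by auto
  then show "msum N S (\<lambda>x. f1 x - f2 x + f3 x - f4 x) $$ (i, l) =
      (msum N S f1 - msum N S f2 + msum N S f3 - msum N S f4) $$ (i, l)"
    using il by (simp add: sum.distrib sum_subtractf)
qed auto

lemma msum_scalar:
  assumes "M \<in> Ops N"
  shows "msum N S (\<lambda>x. c x \<cdot>\<^sub>m M) = (\<Sum>x\<in>S. c x) \<cdot>\<^sub>m M"
  using assms by (intro eq_matI) (auto simp: sum_distrib_right)

lemma msum_swap:
  "msum N (S \<times> T) (\<lambda>(x,y). f x y) = msum N (T \<times> S) (\<lambda>(y,x). f x y)"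
  unfolding msum_def
proof (intro cong_mat refl)
  fix i j
  have "(\<Sum>p\<in>S \<times> T. (case p of (x, y) \<Rightarrow> f x y) $$ (i, j)) = (\<Sum>x\<in>S. \<Sum>y\<in>T. f x y $$ (i,j))"
    by (auto simp: sum.cartesian_product intro!: sum.cong)
  also have "\<dots> = (\<Sum>y\<in>T. \<Sum>x\<in>S. f x y $$ (i,j))" by (rule sum.swap)
  also have "\<dots> = (\<Sum>p\<in>T \<times> S. (case p of (y, x) \<Rightarrow> f x y) $$ (i, j))"
    by (auto simp: sum.cartesian_product intro!: sum.cong)
  finally show "(\<Sum>p\<in>S \<times> T. (case p of (x, y) \<Rightarrow> f x y) $$ (i, j))
      = (\<Sum>p\<in>T \<times> S. (case p of (y, x) \<Rightarrow> f x y) $$ (i, j))" .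
qed

lemma msum_mult:
  assumes "finite S" "finite T" "\<And>x. x \<in> S \<Longrightarrow> f x \<in> Ops N" "\<And>y. y \<in> T \<Longrightarrow> g y \<in> Ops N"
  shows "msum N S f * msum N T g = msum N (S \<times> T) (\<lambda>(x,y). f x * g y)"
proof (rule eq_matI)
  fix i k assume "i < dim_row (msum N (S \<times> T) (\<lambda>(x,y). f x * g y))"
      "k < dim_col (msum N (S \<times> T) (\<lambda>(x,y). f x * g y))"
  hence i: "i < dimH N" and k: "k < dimH N" by auto
  have "(msum N S f * msum N T g) $$ (i,k)
      = (\<Sum>l<dimH N. (\<Sum>x\<in>S. f x $$ (i,l)) * (\<Sum>y\<in>T. g y $$ (l,k)))"
    using i k by (subst mult_index[of _ "dimH N"]) auto
  also have "\<dots> = (\<Sum>x\<in>S. \<Sum>y\<in>T. \<Sum>l<dimH N. f x $$ (i,l) * g y $$ (l,k))"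
    by (simp add: sum_product) (subst sum.swap, rule sum.cong, simp, rule sum.swap)
  also have "\<dots> = (\<Sum>x\<in>S. \<Sum>y\<in>T. (f x * g y) $$ (i,k))"
    using assms i k by (intro sum.cong refl) (simp add: mult_index[of _ "dimH N"])
  also have "\<dots> = msum N (S \<times> T) (\<lambda>(x,y). f x * g y) $$ (i,k)"
    using i k by (simp add: sum.cartesian_product case_prod_beta')
  finally show "(msum N S f * msum N T g) $$ (i,k) = msum N (S \<times> T) (\<lambda>(x,y). f x * g y) $$ (i,k)" .
qed auto

lemma anticomm_msum:
  assumes "finite S" "finite T" "\<And>x. x \<in> S \<Longrightarrow> X x \<in> Ops N" "\<And>y. y \<in> T \<Longrightarrow> Y y \<in> Ops N"
  shows "anticomm (msum N S (\<lambda>x. a x \<cdot>\<^sub>m X x)) (msum N T (\<lambda>y. b y \<cdot>\<^sub>m Y y))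
       = msum N (S \<times> T) (\<lambda>(x,y). (a x * b y) \<cdot>\<^sub>m anticomm (X x) (Y y))"
proof -
  have "anticomm (msum N S (\<lambda>x. a x \<cdot>\<^sub>m X x)) (msum N T (\<lambda>y. b y \<cdot>\<^sub>m Y y))
      = msum N (S \<times> T) (\<lambda>(x,y). (a x \<cdot>\<^sub>m X x) * (b y \<cdot>\<^sub>m Y y))
      + msum N (S \<times> T) (\<lambda>(x,y). (b y \<cdot>\<^sub>m Y y) * (a x \<cdot>\<^sub>m X x))"
    unfolding anticomm_def using assms
    by (simp add: msum_mult msum_swap[of N T S "\<lambda>y x. (b y \<cdot>\<^sub>m Y y) * (a x \<cdot>\<^sub>m X x)"])
  also have "\<dots> = msum N (S \<times> T) (\<lambda>(x,y). anticomm (a x \<cdot>\<^sub>m X x) (b y \<cdot>\<^sub>m Y y))"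
    using assms by (subst msum_add) (auto simp: anticomm_def case_prod_beta' intro!: msum_cong)
  also have "\<dots> = msum N (S \<times> T) (\<lambda>(x,y). (a x * b y) \<cdot>\<^sub>m anticomm (X x) (Y y))"
    using assms by (intro msum_cong) (auto simp: anticomm_smult[of _ N])
  finally show ?thesis .
qed

lemma commutator_msum:
  assumes "finite S" "\<And>x. x \<in> S \<Longrightarrow> X x \<in> Ops N" "\<And>y. y \<in> S \<Longrightarrow> Y y \<in> Ops N"
  shows "commutator (msum N S (\<lambda>x. a x \<cdot>\<^sub>m X x)) (msum N S (\<lambda>y. b y \<cdot>\<^sub>m Y y))
       = msum N (S \<times> S) (\<lambda>(x,y). (a x * b y) \<cdot>\<^sub>m commutator (X x) (Y y))"
proof -
  have "commutator (msum N S (\<lambda>x. a x \<cdot>\<^sub>m X x)) (msum N S (\<lambda>y. b y \<cdot>\<^sub>m Y y))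
      = msum N (S \<times> S) (\<lambda>(x,y). (a x \<cdot>\<^sub>m X x) * (b y \<cdot>\<^sub>m Y y))
      - msum N (S \<times> S) (\<lambda>(x,y). (b y \<cdot>\<^sub>m Y y) * (a x \<cdot>\<^sub>m X x))"
    unfolding commutator_def using assms
    by (simp add: msum_mult msum_swap[of N S S "\<lambda>y x. (b y \<cdot>\<^sub>m Y y) * (a x \<cdot>\<^sub>m X x)"])
  also have "\<dots> = msum N (S \<times> S) (\<lambda>(x,y). (a x \<cdot>\<^sub>m X x) * (b y \<cdot>\<^sub>m Y y) - (b y \<cdot>\<^sub>m Y y) * (a x \<cdot>\<^sub>m X x))"
    using assms by (subst msum_minus) (auto simp: case_prod_beta' intro!: msum_cong)
  also have "\<dots> = msum N (S \<times> S) (\<lambda>(x,y). (a x * b y) \<cdot>\<^sub>m commutator (X x) (Y y))"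
  proof (rule msum_cong[OF refl], clarify)
    fix x y assume "x \<in> S" "y \<in> S"
    then have c: "X x \<in> Ops N" "Y y \<in> Ops N" using assms by auto
    then show "(a x \<cdot>\<^sub>m X x) * (b y \<cdot>\<^sub>m Y y) - (b y \<cdot>\<^sub>m Y y) * (a x \<cdot>\<^sub>m X x)
        = (a x * b y) \<cdot>\<^sub>m commutator (X x) (Y y)"
      unfolding commutator_def
      by (simp add: smult_mult_Ops[where N=N] smult_smult_mat mult.commute)
         (intro eq_matI, auto simp: algebra_simps)
  qed
  finally show ?thesis .
qed

lemma msum_collapse:
  assumes "finite S" "\<And>j. j \<in> S \<Longrightarrow> s j \<in> S" "\<And>j k. M j k \<in> Ops N"
  shows "msum N (S \<times> S) (\<lambda>(j,k). (if k = s j then c j else 0) \<cdot>\<^sub>m M j k)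
       = msum N S (\<lambda>j. c j \<cdot>\<^sub>m M j (s j))"
proof (rule eq_matI)
  fix i l assume "i < dim_row (msum N S (\<lambda>j. c j \<cdot>\<^sub>m M j (s j)))"
    "l < dim_col (msum N S (\<lambda>j. c j \<cdot>\<^sub>m M j (s j)))"
  then have il: "i < dimH N" "l < dimH N" by auto
  have ix: "\<And>a j k. (a \<cdot>\<^sub>m M j k) $$ (i,l) = a * M j k $$ (i,l)"
    using il assms(3) by (metis carrier_matD index_smult_mat(1))
  have "(\<Sum>p\<in>S \<times> S. ((\<lambda>(j,k). (if k = s j then c j else 0) \<cdot>\<^sub>m M j k) p) $$ (i,l))
      = (\<Sum>j\<in>S. \<Sum>k\<in>S. if k = s j then c j * M j k $$ (i,l) else 0)"
    by (auto simp: ix sum.cartesian_product intro!: sum.cong)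
  also have "\<dots> = (\<Sum>j\<in>S. c j * M j (s j) $$ (i,l))"
    using assms by (intro sum.cong refl) (simp add: sum.delta')
  finally show "msum N (S \<times> S) (\<lambda>(j,k). (if k = s j then c j else 0) \<cdot>\<^sub>m M j k) $$ (i, l)
      = msum N S (\<lambda>j. c j \<cdot>\<^sub>m M j (s j)) $$ (i, l)"
    using il by (simp add: ix)
qed auto

section \<open>Monomial operators and the Jordan-Wigner fermions\<close>

definition monop :: "nat \<Rightarrow> (nat \<Rightarrow> bool) \<Rightarrow> (nat \<Rightarrow> nat) \<Rightarrow> (nat \<Rightarrow> complex) \<Rightarrow> complex mat" where
  "monop N P g ph = mat (dimH N) (dimH N) (\<lambda>(a,b). if P b \<and> a = g b then ph b else 0)"

lemma monop_carrier[simp]: "monop N P g ph \<in> Ops N"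
  by (simp add: monop_def)

lemma monop_mult:
  assumes "\<And>b. b < dimH N \<Longrightarrow> P2 b \<Longrightarrow> g2 b < dimH N"
  shows "monop N P1 g1 f1 * monop N P2 g2 f2 =
         monop N (\<lambda>b. P2 b \<and> P1 (g2 b)) (\<lambda>b. g1 (g2 b)) (\<lambda>b. f1 (g2 b) * f2 b)"
proof (rule eq_matI)
  fix a c assume "a < dim_row (monop N (\<lambda>b. P2 b \<and> P1 (g2 b)) (\<lambda>b. g1 (g2 b)) (\<lambda>b. f1 (g2 b) * f2 b))"
    "c < dim_col (monop N (\<lambda>b. P2 b \<and> P1 (g2 b)) (\<lambda>b. g1 (g2 b)) (\<lambda>b. f1 (g2 b) * f2 b))"
  hence a: "a < dimH N" and c: "c < dimH N" by (auto simp: monop_def)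
  have "(monop N P1 g1 f1 * monop N P2 g2 f2) $$ (a,c) =
     (\<Sum>l<dimH N. (if P1 l \<and> a = g1 l then f1 l else 0) * (if P2 c \<and> l = g2 c then f2 c else 0))"
    using a c by (subst mult_index[of _ "dimH N"]) (auto simp: monop_def)
  also have "\<dots> = (\<Sum>l<dimH N. if l = g2 c \<and> P2 c then (if P1 l \<and> a = g1 l then f1 l else 0) * f2 c else 0)"
    by (intro sum.cong) auto
  also have "\<dots> = (if P2 c \<and> P1 (g2 c) \<and> a = g1 (g2 c) then f1 (g2 c) * f2 c else 0)"
    using assms[OF c] by (cases "P2 c") (auto simp: sum.delta)
  finally show "(monop N P1 g1 f1 * monop N P2 g2 f2) $$ (a,c) =
      monop N (\<lambda>b. P2 b \<and> P1 (g2 b)) (\<lambda>b. g1 (g2 b)) (\<lambda>b. f1 (g2 b) * f2 b) $$ (a,c)"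
    using a c by (simp add: monop_def)
qed (auto simp: monop_def)

lemma smult_monop: "c \<cdot>\<^sub>m monop N P g ph = monop N P g (\<lambda>b. c * ph b)"
  by (intro eq_matI) (auto simp: monop_def)

lemma monop_add_cancel:
  assumes "\<And>b. b < dimH N \<Longrightarrow> P b \<longleftrightarrow> P' b"
    "\<And>b. b < dimH N \<Longrightarrow> P b \<Longrightarrow> g b = g' b \<and> f' b = - f b"
  shows "monop N P g f + monop N P' g' f' = 0\<^sub>m (dimH N) (dimH N)"
  using assms by (intro eq_matI) (auto simp: monop_def)

lemma monop_add_one:
  assumes "\<And>b. b < dimH N \<Longrightarrow> P b \<noteq> P' b"
    "\<And>b. b < dimH N \<Longrightarrow> P b \<Longrightarrow> g b = b \<and> f b = 1"
    "\<And>b. b < dimH N \<Longrightarrow> P' b \<Longrightarrow> g' b = b \<and> f' b = 1"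
  shows "monop N P g f + monop N P' g' f' = 1\<^sub>m (dimH N)"
proof (rule eq_matI)
  fix a c assume "a < dim_row (1\<^sub>m (dimH N))" "c < dim_col (1\<^sub>m (dimH N))"
  then show "(monop N P g f + monop N P' g' f') $$ (a,c) = 1\<^sub>m (dimH N) $$ (a,c)"
    using assms[of c] by (cases "P c") (auto simp: monop_def)
qed (auto simp: monop_def)

unbundle bit_operations_syntax

lemma bit_add_pow:
  assumes "\<not> bit (b::nat) k"
  shows "bit (b + 2^k) n \<longleftrightarrow> (n = k \<or> bit b n)"
proof -
  have "b + 2^k = b OR 2^k"
    by (rule disjunctive_add) (use assms in \<open>auto simp: bit_exp_iff\<close>)
  then show ?thesis by (auto simp: bit_or_iff bit_exp_iff)
qed

lemma lt_add_pow:
  assumes "b < dimH N" "k < N" "\<not> bit b k"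
  shows "b + 2^k < dimH N"
proof -
  have e: "b + 2^k = b OR 2^k"
    by (rule disjunctive_add) (use assms in \<open>auto simp: bit_exp_iff\<close>)
  have "take_bit N (b OR 2^k) = b OR 2^k"
    using assms(1,2) by (simp add: take_bit_nat_eq_self dimH_def)
  then show ?thesis unfolding e dimH_def by (metis take_bit_nat_eq_self_iff)
qed

lemma bit_le_pow: assumes "bit (b::nat) k" shows "2^k \<le> b"
proof (rule ccontr)
  assume "\<not> 2^k \<le> b" then have "b div 2^k = 0" by simp
  then show False using assms by (simp add: bit_iff_odd)
qed

lemma sub_pow_bits:
  assumes "bit (b::nat) k"
  shows "\<not> bit (b - 2^k) k" "b - 2^k + 2^k = b"
proof -
  have le: "2^k \<le> b" by (rule bit_le_pow[OF assms])
  then show e: "b - 2^k + 2^k = b" by simp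
  have "b div 2^k = (b - 2^k + 1 * 2^k) div 2^k" using e by simp
  also have "\<dots> = (b - 2^k) div 2^k + 1" by (subst div_mult_self1) auto
  finally show "\<not> bit (b - 2^k) k" using assms by (simp add: bit_iff_odd)
qed

lemma bit_sub_pow:
  assumes "bit (b::nat) k"
  shows "bit (b - 2^k) n \<longleftrightarrow> (n \<noteq> k \<and> bit b n)"
  using bit_add_pow[OF sub_pow_bits(1)[OF assms], of n] sub_pow_bits[OF assms] by auto

definition jw_exp :: "nat \<Rightarrow> nat \<Rightarrow> int" where
  "jw_exp j b = (\<Sum>l\<in>{1..<j}. sz_val b l)"

lemma jw_exp_add:
  assumes "\<not> bit (b::nat) k"
  shows "jw_exp j (b + 2^k) = jw_exp j b + (if k + 1 < j then 2 else 0)"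
proof -
  have "jw_exp j (b + 2^k) = (\<Sum>l\<in>{1..<j}. sz_val b l + (if l = k + 1 then 2 else 0))"
    unfolding jw_exp_def using assms by (intro sum.cong) (auto simp: sz_val_def bit_add_pow)
  then show ?thesis by (simp add: sum.distrib jw_exp_def)
qed

lemma jw_exp_sub:
  assumes "bit (b::nat) k"
  shows "jw_exp j (b - 2^k) = jw_exp j b - (if k + 1 < j then 2 else 0)"
  using jw_exp_add[OF sub_pow_bits(1)[OF assms], of j] sub_pow_bits(2)[OF assms] by simp

lemma ipow_add: "\<i> powi a * \<i> powi b = \<i> powi (a + b)"
  by (simp add: power_int_add)

lemma ipow_shift2: "a = b + 2 \<or> b = a + 2 \<Longrightarrow> \<i> powi a = - (\<i> powi b)"
  by (auto simp: power_int_add)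

lemma jw_string_monop:
  "jw_string eps N j = monop N (\<lambda>b. True) (\<lambda>b. b) (\<lambda>b. \<i> powi (eps * jw_exp j b))"
  by (intro eq_matI) (auto simp: jw_string_def monop_def jw_exp_def)

lemma sigma_plus_monop:
  "sigma_plus N j = monop N (\<lambda>b. \<not> bit b (j-1)) (\<lambda>b. b + 2^(j-1)) (\<lambda>b. 1)"
  by (intro eq_matI) (auto simp: sigma_plus_def monop_def)

lemma sigma_minus_monop:
  "sigma_minus N j = monop N (\<lambda>b. bit b (j-1)) (\<lambda>b. b - 2^(j-1)) (\<lambda>b. 1)"
  by (intro eq_matI) (auto simp: sigma_minus_def monop_def dest: bit_le_pow)

lemma cdag_monop:
  assumes "1 \<le> j" "j \<le> N"
  shows "cdag N j = monop N (\<lambda>b. \<not> bit b (j-1)) (\<lambda>b. b + 2^(j-1)) (\<lambda>b. \<i> powi (int j - 1 + jw_exp j b))"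
proof -
  have "cdag N j = monop N (\<lambda>b. \<not> bit b (j-1)) (\<lambda>b. b + 2^(j-1))
      (\<lambda>b. \<i> powi (int j - 1) * (\<i> powi (1 * jw_exp j (b + 2^(j-1))) * 1))"
    unfolding cdag_def jw_string_monop sigma_plus_monop using assms
    by (subst monop_mult) (auto intro: lt_add_pow simp: smult_monop)
  also have "\<dots> = monop N (\<lambda>b. \<not> bit b (j-1)) (\<lambda>b. b + 2^(j-1)) (\<lambda>b. \<i> powi (int j - 1 + jw_exp j b))"
    unfolding monop_def using assms by (intro cong_mat refl) (auto simp: jw_exp_add ipow_add)
  finally show ?thesis .
qed

lemma cann_monop:
  assumes "1 \<le> j"
  shows "cann N j = monop N (\<lambda>b. bit b (j-1)) (\<lambda>b. b - 2^(j-1)) (\<lambda>b. \<i> powi (- (int j - 1) - jw_exp j b))"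
proof -
  have "cann N j = monop N (\<lambda>b. bit b (j-1)) (\<lambda>b. b - 2^(j-1))
      (\<lambda>b. \<i> powi (- int j + 1) * (\<i> powi (- 1 * jw_exp j (b - 2^(j-1))) * 1))"
    unfolding cann_def jw_string_monop sigma_minus_monop
    by (subst monop_mult) (auto simp: smult_monop)
  also have "\<dots> = monop N (\<lambda>b. bit b (j-1)) (\<lambda>b. b - 2^(j-1)) (\<lambda>b. \<i> powi (- (int j - 1) - jw_exp j b))"
    unfolding monop_def using assms by (intro cong_mat refl) (auto simp: jw_exp_sub ipow_add)
  finally show ?thesis .
qed

lemma cdag_carrier[simp]: "cdag N j \<in> Ops N"
  unfolding cdag_def jw_string_def sigma_plus_def by (simp add: mult_carrier_mat[of _ "dimH N"])

lemma cann_carrier[simp]: "cann N j \<in> Ops N"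
  unfolding cann_def jw_string_def sigma_minus_def by (simp add: mult_carrier_mat[of _ "dimH N"])

lemma cdag_anticomm:
  assumes "1 \<le> j" "j \<le> N" "1 \<le> k" "k \<le> N"
  shows "anticomm (cdag N j) (cdag N k) = 0\<^sub>m (dimH N) (dimH N)"
  unfolding anticomm_def cdag_monop[OF assms(1,2)] cdag_monop[OF assms(3,4)]
proof (subst (1 2) monop_mult)
  show "\<And>b. b < dimH N \<Longrightarrow> \<not> bit b (j - 1) \<Longrightarrow> b + 2 ^ (j - 1) < dimH N"
    "\<And>b. b < dimH N \<Longrightarrow> \<not> bit b (k - 1) \<Longrightarrow> b + 2 ^ (k - 1) < dimH N"
    using assms lt_add_pow by auto
  show "monop N (\<lambda>b. \<not> bit b (k - 1) \<and> \<not> bit (b + 2 ^ (k - 1)) (j - 1)) (\<lambda>b. b + 2 ^ (k - 1) + 2 ^ (j - 1))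
     (\<lambda>b. \<i> powi (int j - 1 + jw_exp j (b + 2 ^ (k - 1))) * \<i> powi (int k - 1 + jw_exp k b)) +
    monop N (\<lambda>b. \<not> bit b (j - 1) \<and> \<not> bit (b + 2 ^ (j - 1)) (k - 1)) (\<lambda>b. b + 2 ^ (j - 1) + 2 ^ (k - 1))
     (\<lambda>b. \<i> powi (int k - 1 + jw_exp k (b + 2 ^ (j - 1))) * \<i> powi (int j - 1 + jw_exp j b)) =
    0\<^sub>m (dimH N) (dimH N)"
  proof (rule monop_add_cancel)
    fix b assume "b < dimH N"
    show "(\<not> bit b (k - 1) \<and> \<not> bit (b + 2 ^ (k - 1)) (j - 1))
        = (\<not> bit b (j - 1) \<and> \<not> bit (b + 2 ^ (j - 1)) (k - 1))"
      by (auto simp: bit_add_pow)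
  next
    fix b assume "b < dimH N" and "\<not> bit b (k - 1) \<and> \<not> bit (b + 2 ^ (k - 1)) (j - 1)"
    then have nb: "\<not> bit b (j-1)" "\<not> bit b (k-1)" and jk: "j - 1 \<noteq> k - 1"
      by (auto simp: bit_add_pow)
    show "b + 2 ^ (k - 1) + 2 ^ (j - 1) = b + 2 ^ (j - 1) + 2 ^ (k - 1) \<and>
       \<i> powi (int k - 1 + jw_exp k (b + 2 ^ (j - 1))) * \<i> powi (int j - 1 + jw_exp j b) =
       - (\<i> powi (int j - 1 + jw_exp j (b + 2 ^ (k - 1))) * \<i> powi (int k - 1 + jw_exp k b))"
      using jw_exp_add[OF nb(1), of k] jw_exp_add[OF nb(2), of j] jk assms
      by (auto simp: ipow_add intro!: ipow_shift2)
  qed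
qed

lemma cann_anticomm:
  assumes "1 \<le> j" "1 \<le> k"
  shows "anticomm (cann N j) (cann N k) = 0\<^sub>m (dimH N) (dimH N)"
  unfolding anticomm_def cann_monop[OF assms(1)] cann_monop[OF assms(2)]
proof (subst (1 2) monop_mult)
  show "\<And>b. b < dimH N \<Longrightarrow> bit b (j - 1) \<Longrightarrow> b - 2 ^ (j - 1) < dimH N"
    "\<And>b. b < dimH N \<Longrightarrow> bit b (k - 1) \<Longrightarrow> b - 2 ^ (k - 1) < dimH N" by auto
  show "monop N (\<lambda>b. bit b (k - 1) \<and> bit (b - 2 ^ (k - 1)) (j - 1)) (\<lambda>b. b - 2 ^ (k - 1) - 2 ^ (j - 1))
     (\<lambda>b. \<i> powi (- (int j - 1) - jw_exp j (b - 2 ^ (k - 1))) * \<i> powi (- (int k - 1) - jw_exp k b)) +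
    monop N (\<lambda>b. bit b (j - 1) \<and> bit (b - 2 ^ (j - 1)) (k - 1)) (\<lambda>b. b - 2 ^ (j - 1) - 2 ^ (k - 1))
     (\<lambda>b. \<i> powi (- (int k - 1) - jw_exp k (b - 2 ^ (j - 1))) * \<i> powi (- (int j - 1) - jw_exp j b)) =
    0\<^sub>m (dimH N) (dimH N)"
  proof (rule monop_add_cancel)
    fix b assume "b < dimH N"
    show "(bit b (k - 1) \<and> bit (b - 2 ^ (k - 1)) (j - 1)) = (bit b (j - 1) \<and> bit (b - 2 ^ (j - 1)) (k - 1))"
      by (auto simp: bit_sub_pow)
  next
    fix b assume "b < dimH N" and "bit b (k - 1) \<and> bit (b - 2 ^ (k - 1)) (j - 1)"
    then have nb: "bit b (j-1)" "bit b (k-1)" and jk: "j - 1 \<noteq> k - 1"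
      by (auto simp: bit_sub_pow)
    show "b - 2 ^ (k - 1) - 2 ^ (j - 1) = b - 2 ^ (j - 1) - 2 ^ (k - 1) \<and>
       \<i> powi (- (int k - 1) - jw_exp k (b - 2 ^ (j - 1))) * \<i> powi (- (int j - 1) - jw_exp j b) =
       - (\<i> powi (- (int j - 1) - jw_exp j (b - 2 ^ (k - 1))) * \<i> powi (- (int k - 1) - jw_exp k b))"
      using jw_exp_sub[OF nb(1), of k] jw_exp_sub[OF nb(2), of j] jk assms
      by (auto simp: ipow_add add.commute intro!: ipow_shift2)
  qed
qed

lemma cann_cdag_anticomm_offdiag:
  assumes "1 \<le> j" "1 \<le> k" "k \<le> N" "j \<noteq> k"
  shows "anticomm (cann N j) (cdag N k) = 0\<^sub>m (dimH N) (dimH N)"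
  unfolding anticomm_def cann_monop[OF assms(1)] cdag_monop[OF assms(2,3)]
proof (subst (1 2) monop_mult)
  show "\<And>b. b < dimH N \<Longrightarrow> bit b (j - 1) \<Longrightarrow> b - 2 ^ (j - 1) < dimH N" by auto
  show "\<And>b. b < dimH N \<Longrightarrow> \<not> bit b (k - 1) \<Longrightarrow> b + 2 ^ (k - 1) < dimH N"
    using assms lt_add_pow by auto
  have jk: "j - 1 \<noteq> k - 1" using assms by auto
  show "monop N (\<lambda>b. \<not> bit b (k - 1) \<and> bit (b + 2 ^ (k - 1)) (j - 1)) (\<lambda>b. b + 2 ^ (k - 1) - 2 ^ (j - 1))
     (\<lambda>b. \<i> powi (- (int j - 1) - jw_exp j (b + 2 ^ (k - 1))) * \<i> powi (int k - 1 + jw_exp k b)) +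
    monop N (\<lambda>b. bit b (j - 1) \<and> \<not> bit (b - 2 ^ (j - 1)) (k - 1)) (\<lambda>b. b - 2 ^ (j - 1) + 2 ^ (k - 1))
     (\<lambda>b. \<i> powi (int k - 1 + jw_exp k (b - 2 ^ (j - 1))) * \<i> powi (- (int j - 1) - jw_exp j b)) =
    0\<^sub>m (dimH N) (dimH N)"
  proof (rule monop_add_cancel)
    fix b assume "b < dimH N"
    show "(\<not> bit b (k - 1) \<and> bit (b + 2 ^ (k - 1)) (j - 1)) = (bit b (j - 1) \<and> \<not> bit (b - 2 ^ (j - 1)) (k - 1))"
      using jk by (auto simp: bit_sub_pow bit_add_pow)
  next
    fix b assume "b < dimH N" and "\<not> bit b (k - 1) \<and> bit (b + 2 ^ (k - 1)) (j - 1)"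
    then have nb: "bit b (j-1)" "\<not> bit b (k-1)" using jk by (auto simp: bit_add_pow)
    show "b + 2 ^ (k - 1) - 2 ^ (j - 1) = b - 2 ^ (j - 1) + 2 ^ (k - 1) \<and>
       \<i> powi (int k - 1 + jw_exp k (b - 2 ^ (j - 1))) * \<i> powi (- (int j - 1) - jw_exp j b) =
       - (\<i> powi (- (int j - 1) - jw_exp j (b + 2 ^ (k - 1))) * \<i> powi (int k - 1 + jw_exp k b))"
      using jw_exp_sub[OF nb(1), of k] jw_exp_add[OF nb(2), of j] jk assms bit_le_pow[OF nb(1)]
      by (auto simp: ipow_add intro!: ipow_shift2)
  qed
qed

(* {c_k, c_k^dag} = 1: the two products project onto the states with site k down resp. up. *)
lemma cann_cdag_anticomm_diag:
  assumes "1 \<le> k" "k \<le> N"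
  shows "anticomm (cann N k) (cdag N k) = 1\<^sub>m (dimH N)"
  unfolding anticomm_def cann_monop[OF assms(1)] cdag_monop[OF assms]
proof (subst (1 2) monop_mult)
  show "\<And>b. b < dimH N \<Longrightarrow> bit b (k - 1) \<Longrightarrow> b - 2 ^ (k - 1) < dimH N" by auto
  show "\<And>b. b < dimH N \<Longrightarrow> \<not> bit b (k - 1) \<Longrightarrow> b + 2 ^ (k - 1) < dimH N"
    using assms lt_add_pow by auto
  show "monop N (\<lambda>b. \<not> bit b (k - 1) \<and> bit (b + 2 ^ (k - 1)) (k - 1)) (\<lambda>b. b + 2 ^ (k - 1) - 2 ^ (k - 1))
     (\<lambda>b. \<i> powi (- (int k - 1) - jw_exp k (b + 2 ^ (k - 1))) * \<i> powi (int k - 1 + jw_exp k b)) +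
    monop N (\<lambda>b. bit b (k - 1) \<and> \<not> bit (b - 2 ^ (k - 1)) (k - 1)) (\<lambda>b. b - 2 ^ (k - 1) + 2 ^ (k - 1))
     (\<lambda>b. \<i> powi (int k - 1 + jw_exp k (b - 2 ^ (k - 1))) * \<i> powi (- (int k - 1) - jw_exp k b)) =
    1\<^sub>m (dimH N)"
  proof (rule monop_add_one)
    fix b assume "b < dimH N"
    show "(\<not> bit b (k - 1) \<and> bit (b + 2 ^ (k - 1)) (k - 1)) \<noteq> (bit b (k - 1) \<and> \<not> bit (b - 2 ^ (k - 1)) (k - 1))"
      by (auto simp: bit_sub_pow bit_add_pow)
  next
    fix b assume "b < dimH N" and "\<not> bit b (k - 1) \<and> bit (b + 2 ^ (k - 1)) (k - 1)"
    then show "b + 2 ^ (k - 1) - 2 ^ (k - 1) = b \<and>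
        \<i> powi (- (int k - 1) - jw_exp k (b + 2 ^ (k - 1))) * \<i> powi (int k - 1 + jw_exp k b) = 1"
      using jw_exp_add[of b "k - 1" k] assms by (auto simp: ipow_add)
  next
    fix b assume "b < dimH N" and nb: "bit b (k - 1) \<and> \<not> bit (b - 2 ^ (k - 1)) (k - 1)"
    then show "b - 2 ^ (k - 1) + 2 ^ (k - 1) = b \<and>
        \<i> powi (int k - 1 + jw_exp k (b - 2 ^ (k - 1))) * \<i> powi (- (int k - 1) - jw_exp k b) = 1"
      using jw_exp_sub[of b "k - 1" k] assms bit_le_pow[of b "k - 1"] by (auto simp: ipow_add)
  qed
qed

lemma cann_cdag_anticomm:
  assumes "1 \<le> j" "1 \<le> k" "k \<le> N"
  shows "anticomm (cann N j) (cdag N k) = (if k = j then 1 else 0) \<cdot>\<^sub>m 1\<^sub>m (dimH N)"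
proof (cases "k = j")
  case True
  then show ?thesis using cann_cdag_anticomm_diag[OF assms(2,3)] by (auto intro!: eq_matI)
next
  case False
  then show ?thesis using cann_cdag_anticomm_offdiag[OF assms] by (auto intro!: eq_matI)
qed

section \<open>The modes theta_k and their anticommutators\<close>

(* The Gram sum of the mode functions; it is the scalar {theta_l, theta_k^dag} up to the factor -i. *)
definition gram :: "nat \<Rightarrow> nat \<Rightarrow> nat \<Rightarrow> complex" where
  "gram N l k = (\<Sum>j\<in>{1..N}. Acoef N l j * Acoef N k j)"

lemma thetadag_carrier[simp]: "thetadag N l \<in> Ops N" by (simp add: thetadag_def)

lemma theta_carrier[simp]: "theta N l \<in> Ops N" by (simp add: theta_def)

(* By bilinearity the CAR for c_j give the anticommutators of the modes theta_k. *)
lemma thetadag_anticomm: "anticomm (thetadag N l) (thetadag N k) = 0\<^sub>m (dimH N) (dimH N)"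
proof -
  have "anticomm (thetadag N l) (thetadag N k)
      = msum N ({1..N} \<times> {1..N}) (\<lambda>(x,y). (Acoef N l x * Acoef N k y) \<cdot>\<^sub>m anticomm (cdag N x) (cdag N y))"
    unfolding thetadag_def by (rule anticomm_msum) auto
  also have "\<dots> = 0\<^sub>m (dimH N) (dimH N)"
    by (rule msum_zero) (auto simp: cdag_anticomm)
  finally show ?thesis .
qed

lemma theta_anticomm: "anticomm (theta N l) (theta N k) = 0\<^sub>m (dimH N) (dimH N)"
proof -
  have "anticomm (theta N l) (theta N k) = (-\<i> * -\<i>) \<cdot>\<^sub>m
      msum N ({1..N} \<times> {1..N}) (\<lambda>(x,y). (Acoef N l x * Acoef N k y) \<cdot>\<^sub>m anticomm (cann N x) (cann N y))"
    unfolding theta_def by (subst anticomm_smult[where N=N]) (auto simp: anticomm_msum)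
  also have "\<dots> = 0\<^sub>m (dimH N) (dimH N)"
    by (subst msum_zero) (auto simp: cann_anticomm)
  finally show ?thesis .
qed

lemma theta_thetadag_anticomm:
  "anticomm (theta N l) (thetadag N k) = (- \<i> * gram N l k) \<cdot>\<^sub>m 1\<^sub>m (dimH N)"
proof -
  have "anticomm (theta N l) (thetadag N k) = (- \<i>) \<cdot>\<^sub>m
      msum N ({1..N} \<times> {1..N}) (\<lambda>(x,y). (Acoef N l x * Acoef N k y) \<cdot>\<^sub>m anticomm (cann N x) (cdag N y))"
    unfolding theta_def thetadag_def
    by (subst anticomm_smult_left[where N=N]) (auto simp: anticomm_msum)
  also have "msum N ({1..N} \<times> {1..N}) (\<lambda>(x,y). (Acoef N l x * Acoef N k y) \<cdot>\<^sub>m anticomm (cann N x) (cdag N y))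
      = msum N ({1..N} \<times> {1..N}) (\<lambda>(x,y). (if y = x then Acoef N l x * Acoef N k x else 0) \<cdot>\<^sub>m 1\<^sub>m (dimH N))"
    by (rule msum_cong) (auto simp: cann_cdag_anticomm smult_smult_mat)
  also have "\<dots> = gram N l k \<cdot>\<^sub>m 1\<^sub>m (dimH N)"
    by (subst msum_collapse[where s="\<lambda>x. x"]) (auto simp: gram_def msum_scalar)
  finally show ?thesis by (simp add: smult_smult_mat)
qed

lemma cis_ne_one:
  assumes "0 < \<bar>t\<bar>" "\<bar>t\<bar> < 2 * pi"
  shows "cis t \<noteq> 1"
proof
  assume "cis t = 1"
  then have "cos t = 1" by (metis cis.sel(1) one_complex.sel(1))
  then obtain n :: int where n: "t = real_of_int n * 2 * pi" using cos_one_2pi_int by blast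
  then have "\<bar>real_of_int n\<bar> < 1" using assms(2) by (simp add: abs_mult)
  then have "n = 0" by linarith
  then show False using n assms(1) by simp
qed

lemma cis_frac_ne_one:
  assumes "0 < N" "m \<noteq> 0" "\<bar>m\<bar> < 2 * int N"
  shows "cis (pi * real_of_int m / real N) \<noteq> 1"
proof (rule cis_ne_one)
  define q where "q = \<bar>real_of_int m\<bar> / real N"
  have e: "\<bar>pi * real_of_int m / real N\<bar> = pi * q"
    using assms(1) by (simp add: q_def abs_mult abs_divide)
  have q: "0 < q" "q < 2" using assms by (auto simp: q_def divide_less_eq)
  then show "0 < \<bar>pi * real_of_int m / real N\<bar>" unfolding e by simp
  have "pi * q < pi * 2" using q(2) by (intro mult_strict_left_mono) auto
  then show "\<bar>pi * real_of_int m / real N\<bar> < 2 * pi" unfolding e by simp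
qed

lemma cis_frac_pow_N:
  assumes "N > 0"
  shows "cis (pi * real l / real N) ^ N = (-1) ^ l"
proof -
  have "cis (pi * real l / real N) ^ N = cis (real N * (pi * real l / real N))" by (rule DeMoivre)
  also have "real N * (pi * real l / real N) = real l * pi" using assms by simp
  also have "cis (real l * pi) = cis pi ^ l" by (rule DeMoivre[symmetric])
  finally show ?thesis by simp
qed

lemma inverse_minus_one_pow: "inverse ((-1::complex) ^ n) = (-1) ^ n"
  by (induct n) (simp_all add: inverse_mult_distrib)

lemma Acoef_pow:
  "Acoef N k j = (1/2) * (1 + \<i> * inverse (cis (pi * k / N))) * (cis (pi * k / N)) ^ j
               - (1/2) * (1 + \<i> * cis (pi * k / N)) * (inverse (cis (pi * k / N))) ^ j"
proof -
  have "cis (pi * real k * real j / real N) = cis (pi * k / N) ^ j"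
    "cis (- pi * real k * real j / real N) = (inverse (cis (pi * k / N))) ^ j"
    "cis (- pi * real k / real N) = inverse (cis (pi * k / N))"
    by (simp_all add: DeMoivre mult_ac)
  then show ?thesis unfolding Acoef_def by simp
qed

lemma geometric_sum_root:
  fixes z :: complex
  assumes "z \<noteq> 1" "z ^ N = s"
  shows "(\<Sum>j\<in>{1..N}. z ^ j) = z * (s - 1) / (z - 1)"
proof -
  have "z - 1 \<noteq> 0" "1 - z \<noteq> 0" using assms by auto
  then show ?thesis using assms(2) by (cases "N = 0") (auto simp: sum_gp field_simps)
qed

lemma sum_product_four:
  fixes a b c d x y :: complex
  shows "(\<Sum>j\<in>{1..N}. (a * x ^ j - b * (inverse x) ^ j) * (c * y ^ j - d * (inverse y) ^ j)) =
    a * c * (\<Sum>j\<in>{1..N}. (x*y) ^ j) - a * d * (\<Sum>j\<in>{1..N}. (x * inverse y) ^ j)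
    - b * c * (\<Sum>j\<in>{1..N}. (inverse x * y) ^ j) + b * d * (\<Sum>j\<in>{1..N}. (inverse x * inverse y) ^ j)"
  by (simp add: algebra_simps sum.distrib sum_subtractf sum_distrib_left power_mult_distrib)

lemma gram_geometric:
  fixes N l k :: nat
  defines "x \<equiv> cis (pi * real l / real N)" and "y \<equiv> cis (pi * real k / real N)"
  shows "gram N l k =
     (1/2) * (1 + \<i> * inverse x) * ((1/2) * (1 + \<i> * inverse y)) * (\<Sum>j\<in>{1..N}. (x*y) ^ j)
     - (1/2) * (1 + \<i> * inverse x) * ((1/2) * (1 + \<i> * y)) * (\<Sum>j\<in>{1..N}. (x * inverse y) ^ j)
     - (1/2) * (1 + \<i> * x) * ((1/2) * (1 + \<i> * inverse y)) * (\<Sum>j\<in>{1..N}. (inverse x * y) ^ j)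
     + (1/2) * (1 + \<i> * x) * ((1/2) * (1 + \<i> * y)) * (\<Sum>j\<in>{1..N}. (inverse x * inverse y) ^ j)"
  unfolding gram_def Acoef_pow x_def y_def by (rule sum_product_four)

lemma gram_offdiag_cancel:
  fixes x y s :: complex
  assumes "x \<noteq> 0" "y \<noteq> 0" "x * y \<noteq> 1" "x \<noteq> y"
  shows "(1/2) * (1 + \<i> * inverse x) * ((1/2) * (1 + \<i> * inverse y)) * ((x*y) * (s - 1) / (x*y - 1))
     - (1/2) * (1 + \<i> * inverse x) * ((1/2) * (1 + \<i> * y)) * ((x * inverse y) * (s - 1) / (x * inverse y - 1))
     - (1/2) * (1 + \<i> * x) * ((1/2) * (1 + \<i> * inverse y)) * ((inverse x * y) * (s - 1) / (inverse x * y - 1))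
     + (1/2) * (1 + \<i> * x) * ((1/2) * (1 + \<i> * y)) * ((inverse x * inverse y) * (s - 1) / (inverse x * inverse y - 1))
     = 0"
proof -
  have d1: "x * y - 1 \<noteq> 0" and d2: "x - y \<noteq> 0" using assms by auto
  define P where "P = (s - 1) / (x * y - 1)"
  define Q where "Q = (s - 1) / (x - y)"
  have hP: "(x * y - 1) * P = s - 1" using d1 by (simp add: P_def)
  have hQ: "(x - y) * Q = s - 1" using d2 by (simp add: Q_def)
  have r: "(x*y) * (s - 1) / (x*y - 1) = x * y * P"
    "(x * inverse y) * (s - 1) / (x * inverse y - 1) = x * Q"
    "(inverse x * y) * (s - 1) / (inverse x * y - 1) = - y * Q"
    "(inverse x * inverse y) * (s - 1) / (inverse x * inverse y - 1) = - P"
    using assms d1 d2 by (simp_all add: P_def Q_def field_simps)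
  have q: "(1 + \<i>*inverse x)*(1+\<i>*inverse y)*(x*y*P) = (x+\<i>)*(y+\<i>)*P"
    "(1 + \<i>*inverse x)*(1+\<i>*y)*(x*Q) = (x+\<i>)*(1+\<i>*y)*Q"
    "(1 + \<i>*x)*(1+\<i>*inverse y)*(y*Q) = (1+\<i>*x)*(y+\<i>)*Q"
    using assms by (simp_all add: field_simps)
  have "(1/2) * (1 + \<i> * inverse x) * ((1/2) * (1 + \<i> * inverse y)) * (x * y * P)
     - (1/2) * (1 + \<i> * inverse x) * ((1/2) * (1 + \<i> * y)) * (x * Q)
     - (1/2) * (1 + \<i> * x) * ((1/2) * (1 + \<i> * inverse y)) * (- y * Q)
     + (1/2) * (1 + \<i> * x) * ((1/2) * (1 + \<i> * y)) * (- P)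
     = (1/4) * ((1 + \<i>*inverse x)*(1+\<i>*inverse y)*(x*y*P) - (1 + \<i>*inverse x)*(1+\<i>*y)*(x*Q)
          + (1 + \<i>*x)*(1+\<i>*inverse y)*(y*Q) - (1+\<i>*x)*(1+\<i>*y)*P)"
    by (simp add: field_simps)
  also have "\<dots> = (1/4) * ((x + \<i>)*(y+\<i>)*P - (1+\<i>*x)*(1+\<i>*y)*P
          - (x + \<i>) * (1 + \<i> * y) * Q + (1 + \<i> * x) * (y + \<i>) * Q)"
    unfolding q by (simp add: algebra_simps)
  also have "\<dots> = (1/2) * ((x*y-1)*P - (x - y) * Q)"
    by (simp add: algebra_simps)
  also have "\<dots> = 0" unfolding hP hQ by simp
  finally show ?thesis unfolding r .
qed

lemma gram_offdiag:
  assumes N: "0 < N" and lk: "1 \<le> l" "l < N" "1 \<le> k" "k < N" "l \<noteq> k"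
  shows "gram N l k = 0"
proof -
  define x where "x = cis (pi * real l / real N)"
  define y where "y = cis (pi * real k / real N)"
  define s :: complex where "s = (-1) ^ (l + k)"
  have x0: "x \<noteq> 0" "y \<noteq> 0" by (auto simp: x_def y_def)
  have xy: "x * y = cis (pi * real_of_int (int l + int k) / real N)"
    by (simp add: x_def y_def cis_mult add_divide_distrib algebra_simps)
  have xiy: "x * inverse y = cis (pi * real_of_int (int l - int k) / real N)"
    by (simp add: x_def y_def cis_mult diff_divide_distrib algebra_simps)
  have xy1: "x * y \<noteq> 1" unfolding xy using N lk by (intro cis_frac_ne_one) auto
  have xiy1: "x * inverse y \<noteq> 1" unfolding xiy using N lk by (intro cis_frac_ne_one) auto
  have ixy1: "inverse x * y \<noteq> 1" "inverse x * inverse y \<noteq> 1"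
    using xy1 xiy1 x0 by (auto simp: field_simps)
  have xN: "x ^ N = (-1) ^ l" "y ^ N = (-1) ^ k"
    using cis_frac_pow_N[OF N] by (auto simp: x_def y_def)
  have pows: "(x * y) ^ N = s" "(x * inverse y) ^ N = s" "(inverse x * y) ^ N = s"
    "(inverse x * inverse y) ^ N = s"
    unfolding power_mult_distrib power_inverse xN inverse_minus_one_pow s_def power_add by simp_all
  have "x \<noteq> y" using xiy1 x0 by auto
  then show ?thesis
    unfolding gram_geometric x_def[symmetric] y_def[symmetric]
    using geometric_sum_root[OF xy1 pows(1)] geometric_sum_root[OF xiy1 pows(2)]
      geometric_sum_root[OF ixy1(1) pows(3)] geometric_sum_root[OF ixy1(2) pows(4)]
      gram_offdiag_cancel[OF x0 xy1] by simp
qed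

lemma gram_diag:
  assumes N: "0 < N" and l: "1 \<le> l" "l < N"
  shows "gram N l l = - \<i> * of_real (real N * cos (pi * real l / real N))"
proof -
  define x where "x = cis (pi * real l / real N)"
  have x0: "x \<noteq> 0" by (simp add: x_def)
  have xx: "x * x = cis (pi * real_of_int (int l + int l) / real N)"
    by (simp add: x_def cis_mult add_divide_distrib algebra_simps)
  have xx1: "x * x \<noteq> 1" unfolding xx using N l by (intro cis_frac_ne_one) auto
  then have ixx1: "inverse x * inverse x \<noteq> 1" using x0 by (auto simp: field_simps)
  have xN: "x ^ N = (-1) ^ l" using cis_frac_pow_N[OF N] by (simp add: x_def)
  have m1: "(-1::complex) ^ l * (-1) ^ l = 1" by (induct l) auto
  have pows: "(x * x) ^ N = 1" "(inverse x * inverse x) ^ N = 1"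
    unfolding power_mult_distrib power_inverse xN inverse_minus_one_pow m1 by simp_all
  have "gram N l l = - ((1/2) * (1 + \<i> * inverse x) * ((1/2) * (1 + \<i> * x)) * of_nat N)
       - (1/2) * (1 + \<i> * x) * ((1/2) * (1 + \<i> * inverse x)) * of_nat N"
    unfolding gram_geometric x_def[symmetric]
    using geometric_sum_root[OF xx1 pows(1)] geometric_sum_root[OF ixx1 pows(2)] x0 by simp
  also have "\<dots> = - \<i> * ((x + inverse x) / 2) * of_nat N"
    using x0 by (simp add: field_simps)
  also have "(x + inverse x) / 2 = of_real (cos (pi * real l / real N))"
    by (simp add: x_def cis.ctr complex_eq_iff)
  finally show ?thesis by simp
qed

section \<open>The normalised modes eta_n\<close>

lemma mode_range_iff: "j \<in> mode_range N \<longleftrightarrow> - int (N div 2) + 1 \<le> j \<and> j \<le> int (N div 2) - 1"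
  by (simp add: mode_range_def)

lemma mode_range_neg: "j \<in> mode_range N \<Longrightarrow> - j \<in> mode_range N"
  by (auto simp: mode_range_iff)

lemma finite_mode_range[simp]: "finite (mode_range N)"
  by (simp add: mode_range_def)

lemma sinc_pos:
  assumes N: "0 < N" and j: "- int N < j" "j < int N" "j \<noteq> 0"
  shows "0 < sin (pi * real_of_int j / real N) / real_of_int j"
proof -
  have pos: "0 < sin (pi * real_of_int m / real N)" if "0 < m" "m < int N" for m
  proof (rule sin_gt_zero)
    show "0 < pi * real_of_int m / real N" using that N by simp
    have "real_of_int m / real N < 1" using that N by simp
    then have "pi * (real_of_int m / real N) < pi * 1" by (intro mult_strict_left_mono) auto
    then show "pi * real_of_int m / real N < pi" by simp
  qed
  show ?thesis
  proof (cases "0 < j")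
    case True
    then show ?thesis using pos[of j] j by simp
  next
    case False
    then have "sin (pi * real_of_int j / real N) < 0" "j < 0" using pos[of "- j"] j by auto
    then show ?thesis by (simp add: divide_neg_neg)
  qed
qed

lemma sinc_fac_pos:
  assumes "0 < N" "- int N < j" "j < int N"
  shows "0 < sinc_fac N j"
  using sinc_pos[OF assms] assms(1) by (auto simp: sinc_fac_def)

lemma sinc_fac_neg: "sinc_fac N (-j) = sinc_fac N j"
  by (simp add: sinc_fac_def)

definition alpha :: "nat \<Rightarrow> int \<Rightarrow> real" where
  "alpha N j = (if j = 0 then 1 / sqrt pi
                else sqrt (real_of_int j / (real N * sin (pi * real_of_int j / real N))))"

lemma eta_p_eq: "eta_p N j = complex_of_real (alpha N j) \<cdot>\<^sub>m thetadag N (nat (int (N div 2) + j))"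
  by (simp add: eta_p_def alpha_def)

lemma eta_m_eq: "eta_m N j = complex_of_real (alpha N j) \<cdot>\<^sub>m theta N (nat (int (N div 2) - j))"
  by (simp add: eta_m_def alpha_def)

lemma eta_p_carrier[simp]: "eta_p N j \<in> Ops N" by (simp add: eta_p_eq)

lemma eta_m_carrier[simp]: "eta_m N j \<in> Ops N" by (simp add: eta_m_eq)

lemma alpha_neg: "alpha N (-j) = alpha N j"
  by (simp add: alpha_def)

(* alpha_j^2 N sin(pi j/N) = j: the normalisation that makes {eta^-_j, eta^+_{-j}} = -j. *)
lemma alpha_sq:
  assumes N: "2 \<le> N" and j: "j \<in> mode_range N"
  shows "alpha N j * alpha N j * (real N * sin (pi * real_of_int j / real N)) = real_of_int j"
proof (cases "j = 0")
  case False
  have pos: "0 < sin (pi * real_of_int j / real N) / real_of_int j"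
    using j N False by (intro sinc_pos) (auto simp: mode_range_iff)
  then have sne: "sin (pi * real_of_int j / real N) \<noteq> 0" by auto
  have "real_of_int j / (real N * sin (pi * real_of_int j / real N))
      = inverse (real N * (sin (pi * real_of_int j / real N) / real_of_int j))"
    using False sne by (simp add: field_simps)
  moreover have "0 < real N * (sin (pi * real_of_int j / real N) / real_of_int j)"
    using pos N by (intro mult_pos_pos) auto
  ultimately have "0 < real_of_int j / (real N * sin (pi * real_of_int j / real N))"
    by (metis positive_imp_inverse_positive)
  then have "alpha N j * alpha N j = real_of_int j / (real N * sin (pi * real_of_int j / real N))"
    using False by (simp only: alpha_def if_False real_sqrt_mult_self abs_of_pos)
  then show ?thesis using sne N by (simp add: field_simps)
qed simp

lemma eta_p_anticomm: "anticomm (eta_p N j) (eta_p N k) = 0\<^sub>m (dimH N) (dimH N)"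
  unfolding eta_p_eq by (simp add: anticomm_smult[where N=N] thetadag_anticomm)

lemma eta_m_anticomm: "anticomm (eta_m N j) (eta_m N k) = 0\<^sub>m (dimH N) (dimH N)"
  unfolding eta_m_eq by (simp add: anticomm_smult[where N=N] theta_anticomm)

lemma eta_m_eta_p_anticomm:
  assumes N: "even N" "2 \<le> N" and jk: "j \<in> mode_range N" "k \<in> mode_range N"
  shows "anticomm (eta_m N j) (eta_p N k) = (if k = - j then - of_int j else 0) \<cdot>\<^sub>m 1\<^sub>m (dimH N)"
proof -
  define l where "l = nat (int (N div 2) - j)"
  define m where "m = nat (int (N div 2) + k)"
  have lr: "1 \<le> l" "l < N" "1 \<le> m" "m < N" using jk N by (auto simp: l_def m_def mode_range_iff)
  have lm: "l = m \<longleftrightarrow> k = - j" using jk N by (auto simp: l_def m_def mode_range_iff)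
  have "anticomm (eta_m N j) (eta_p N k)
      = (complex_of_real (alpha N j * alpha N k) * (- \<i> * gram N l m)) \<cdot>\<^sub>m 1\<^sub>m (dimH N)"
    unfolding eta_m_eq eta_p_eq l_def[symmetric] m_def[symmetric]
    by (simp add: anticomm_smult[where N=N] theta_thetadag_anticomm smult_smult_mat)
  also have "complex_of_real (alpha N j * alpha N k) * (- \<i> * gram N l m)
      = (if k = - j then - of_int j else 0)"
  proof (cases "k = - j")
    case True
    have "real l = real N / 2 - real_of_int j"
      using jk N by (auto simp: l_def mode_range_iff elim!: evenE)
    then have "pi * real l / real N = pi / 2 - pi * real_of_int j / real N"
      using N by (simp add: field_simps) (simp flip: distrib_left)
    then have "- \<i> * gram N l m = - complex_of_real (real N * sin (pi * real_of_int j / real N))"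
      using gram_diag[of N l] lr True lm by (simp add: cos_sin_eq)
    then have "complex_of_real (alpha N j * alpha N k) * (- \<i> * gram N l m)
        = - complex_of_real (alpha N j * alpha N j * (real N * sin (pi * real_of_int j / real N)))"
      using True alpha_neg by (simp add: mult_ac)
    then show ?thesis using True alpha_sq[OF N(2) jk(1)] by simp
  next
    case False
    then show ?thesis using gram_offdiag[of N l m] lr lm by simp
  qed
  finally show ?thesis .
qed

lemma eta_p_eta_m_anticomm:
  assumes "even N" "2 \<le> N" "j \<in> mode_range N" "k \<in> mode_range N"
  shows "anticomm (eta_p N j) (eta_m N k) = (if k = - j then of_int j else 0) \<cdot>\<^sub>m 1\<^sub>m (dimH N)"
  using eta_m_eta_p_anticomm[OF assms(1,2,4,3)] anticomm_sym[of "eta_p N j" N "eta_m N k"] by auto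

section \<open>Commutators of quadratic expressions\<close>

lemma commutator_products:
  fixes P Q R T :: "complex mat"
  assumes c: "P \<in> Ops N" "Q \<in> Ops N" "R \<in> Ops N" "T \<in> Ops N"
    and h1: "anticomm Q R = k1 \<cdot>\<^sub>m 1\<^sub>m (dimH N)"
    and h2: "anticomm Q T = k2 \<cdot>\<^sub>m 1\<^sub>m (dimH N)"
    and h3: "anticomm P R = k3 \<cdot>\<^sub>m 1\<^sub>m (dimH N)"
    and h4: "anticomm P T = k4 \<cdot>\<^sub>m 1\<^sub>m (dimH N)"
  shows "commutator (P * Q) (R * T) =
         k1 \<cdot>\<^sub>m (P * T) - k2 \<cdot>\<^sub>m (P * R) + k3 \<cdot>\<^sub>m (T * Q) - k4 \<cdot>\<^sub>m (R * Q)"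
proof -
  note ring = assoc_mult_mat[of _ "dimH N" "dimH N" _ "dimH N" _ "dimH N"]
    mult_add_distrib_mat[of _ "dimH N" "dimH N" _ "dimH N"]
    add_mult_distrib_mat[of _ "dimH N" "dimH N" _ _ "dimH N"]
  have unit: "(k \<cdot>\<^sub>m 1\<^sub>m (dimH N)) * A = k \<cdot>\<^sub>m A" "A * (k \<cdot>\<^sub>m 1\<^sub>m (dimH N)) = k \<cdot>\<^sub>m A"
    if "A \<in> Ops N" for A and k :: complex
    using that by (simp_all add: smult_mult_Ops[where N=N])
  have e1: "k1 \<cdot>\<^sub>m (P * T) = P * (Q * (R * T)) + P * (R * (Q * T))"
  proof -
    have "k1 \<cdot>\<^sub>m (P * T) = P * ((k1 \<cdot>\<^sub>m 1\<^sub>m (dimH N)) * T)"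
      using c by (simp add: unit smult_mult_Ops[where N=N])
    then show ?thesis using c unfolding h1[symmetric] anticomm_def by (simp add: ring)
  qed
  have e2: "k2 \<cdot>\<^sub>m (P * R) = P * (R * (Q * T)) + P * (R * (T * Q))"
  proof -
    have "k2 \<cdot>\<^sub>m (P * R) = P * (R * (k2 \<cdot>\<^sub>m 1\<^sub>m (dimH N)))"
      using c by (simp add: unit smult_mult_Ops[where N=N])
    then show ?thesis using c unfolding h2[symmetric] anticomm_def by (simp add: ring)
  qed
  have e3: "k3 \<cdot>\<^sub>m (T * Q) = P * (R * (T * Q)) + R * (P * (T * Q))"
  proof -
    have "k3 \<cdot>\<^sub>m (T * Q) = (k3 \<cdot>\<^sub>m 1\<^sub>m (dimH N)) * (T * Q)" using c by (simp add: unit)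
    then show ?thesis using c unfolding h3[symmetric] anticomm_def by (simp add: ring)
  qed
  have e4: "k4 \<cdot>\<^sub>m (R * Q) = R * (P * (T * Q)) + R * (T * (P * Q))"
  proof -
    have "k4 \<cdot>\<^sub>m (R * Q) = R * ((k4 \<cdot>\<^sub>m 1\<^sub>m (dimH N)) * Q)"
      using c by (simp add: unit smult_mult_Ops[where N=N])
    then show ?thesis using c unfolding h4[symmetric] anticomm_def by (simp add: ring)
  qed
  have "commutator (P * Q) (R * T) = P * (Q * (R * T)) - R * (T * (P * Q))"
    using c by (simp add: commutator_def ring)
  then show ?thesis unfolding e1 e2 e3 e4 using c by (intro eq_matI) auto
qed

(* Quadratic forms sum_j c_j X_j Y_{-j} over the mode range: the shape of all W operators. *)
definition qform :: "nat \<Rightarrow> (int \<Rightarrow> complex) \<Rightarrow> (int \<Rightarrow> complex mat) \<Rightarrow> (int \<Rightarrow> complex mat) \<Rightarrow> complex mat" where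
  "qform N c X Y = msum N (mode_range N) (\<lambda>j. c j \<cdot>\<^sub>m (X j * Y (- j)))"

lemma qform_carrier[simp]: "qform N c X Y \<in> Ops N"
  by (simp add: qform_def)

lemma dim_qform[simp]: "dim_row (qform N c X Y) = dimH N" "dim_col (qform N c X Y) = dimH N"
  by (simp_all add: qform_def)

lemma qform_cong:
  "(\<And>j. j \<in> mode_range N \<Longrightarrow> c j = d j) \<Longrightarrow> qform N c X Y = qform N d X Y"
  unfolding qform_def by (rule msum_cong) auto

lemma qform_add:
  assumes "\<And>j. X j \<in> Ops N" "\<And>j. Y j \<in> Ops N"
  shows "qform N c X Y + qform N d X Y = qform N (\<lambda>j. c j + d j) X Y"
  unfolding qform_def using assms
  by (subst msum_add) (auto intro!: msum_cong simp: add_smult_distrib_right_mat[where nr="dimH N" and nc="dimH N"])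

lemma qform_diff:
  assumes "\<And>j. X j \<in> Ops N" "\<And>j. Y j \<in> Ops N"
  shows "qform N c X Y - qform N d X Y = qform N (\<lambda>j. c j - d j) X Y"
  unfolding qform_def using assms
  by (subst msum_minus) (auto intro!: msum_cong eq_matI simp: algebra_simps)

lemma qform_smult:
  assumes "\<And>j. X j \<in> Ops N" "\<And>j. Y j \<in> Ops N"
  shows "a \<cdot>\<^sub>m qform N c X Y = qform N (\<lambda>j. a * c j) X Y"
  unfolding qform_def using assms
  by (subst msum_smult) (auto intro!: msum_cong simp: smult_smult_mat)

lemma qform_zero[simp]:
  "(\<And>j. X j \<in> Ops N) \<Longrightarrow> (\<And>j. Y j \<in> Ops N) \<Longrightarrow> qform N (\<lambda>j. 0) X Y = 0\<^sub>m (dimH N) (dimH N)"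
  unfolding qform_def by (rule msum_zero) (simp add: zero_smult_mat)

lemma commutator_qform_term:
  assumes c: "\<And>j. P j \<in> Ops N" "\<And>j. Q j \<in> Ops N" "\<And>j. R j \<in> Ops N" "\<And>j. T j \<in> Ops N"
    and h: "\<And>j k. j \<in> mode_range N \<Longrightarrow> k \<in> mode_range N \<Longrightarrow>
              anticomm (Q j) (R k) = (if k = - j then \<kappa>QR j else 0) \<cdot>\<^sub>m 1\<^sub>m (dimH N)"
      "\<And>j k. j \<in> mode_range N \<Longrightarrow> k \<in> mode_range N \<Longrightarrow>
              anticomm (Q j) (T k) = (if k = - j then \<kappa>QT j else 0) \<cdot>\<^sub>m 1\<^sub>m (dimH N)"
      "\<And>j k. j \<in> mode_range N \<Longrightarrow> k \<in> mode_range N \<Longrightarrow>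
              anticomm (P j) (R k) = (if k = - j then \<kappa>PR j else 0) \<cdot>\<^sub>m 1\<^sub>m (dimH N)"
      "\<And>j k. j \<in> mode_range N \<Longrightarrow> k \<in> mode_range N \<Longrightarrow>
              anticomm (P j) (T k) = (if k = - j then \<kappa>PT j else 0) \<cdot>\<^sub>m 1\<^sub>m (dimH N)"
    and jk: "j \<in> mode_range N" "k \<in> mode_range N"
  shows "(a j * b k) \<cdot>\<^sub>m commutator (P j * Q (- j)) (R k * T (- k))
       = (if k = j then a j * b j * \<kappa>QR (- j) else 0) \<cdot>\<^sub>m (P j * T (- k))
       - (if k = - j then a j * b (- j) * \<kappa>QT (- j) else 0) \<cdot>\<^sub>m (P j * R k)
       + (if k = - j then a j * b (- j) * \<kappa>PR j else 0) \<cdot>\<^sub>m (T (- k) * Q (- j))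
       - (if k = j then a j * b j * \<kappa>PT j else 0) \<cdot>\<^sub>m (R k * Q (- j))"
proof -
  have dims: "dim_row (P i) = dimH N" "dim_col (P i) = dimH N" "dim_row (Q i) = dimH N"
    "dim_col (Q i) = dimH N" "dim_row (R i) = dimH N" "dim_col (R i) = dimH N"
    "dim_row (T i) = dimH N" "dim_col (T i) = dimH N" for i
    using c[of i] by auto
  have "- j \<in> mode_range N" "- k \<in> mode_range N" using jk by (auto simp: mode_range_neg)
  then have "commutator (P j * Q (- j)) (R k * T (- k))
      = (if k = j then \<kappa>QR (- j) else 0) \<cdot>\<^sub>m (P j * T (- k))
      - (if k = - j then \<kappa>QT (- j) else 0) \<cdot>\<^sub>m (P j * R k)
      + (if k = - j then \<kappa>PR j else 0) \<cdot>\<^sub>m (T (- k) * Q (- j))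
      - (if k = j then \<kappa>PT j else 0) \<cdot>\<^sub>m (R k * Q (- j))"
    using jk by (intro commutator_products[where N=N]) (auto simp: c h)
  then show ?thesis using c by (intro eq_matI) (auto simp: algebra_simps dims)
qed

lemma commutator_qform:
  assumes c: "\<And>j. P j \<in> Ops N" "\<And>j. Q j \<in> Ops N" "\<And>j. R j \<in> Ops N" "\<And>j. T j \<in> Ops N"
    and h: "\<And>j k. j \<in> mode_range N \<Longrightarrow> k \<in> mode_range N \<Longrightarrow>
              anticomm (Q j) (R k) = (if k = - j then \<kappa>QR j else 0) \<cdot>\<^sub>m 1\<^sub>m (dimH N)"
      "\<And>j k. j \<in> mode_range N \<Longrightarrow> k \<in> mode_range N \<Longrightarrow>
              anticomm (Q j) (T k) = (if k = - j then \<kappa>QT j else 0) \<cdot>\<^sub>m 1\<^sub>m (dimH N)"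
      "\<And>j k. j \<in> mode_range N \<Longrightarrow> k \<in> mode_range N \<Longrightarrow>
              anticomm (P j) (R k) = (if k = - j then \<kappa>PR j else 0) \<cdot>\<^sub>m 1\<^sub>m (dimH N)"
      "\<And>j k. j \<in> mode_range N \<Longrightarrow> k \<in> mode_range N \<Longrightarrow>
              anticomm (P j) (T k) = (if k = - j then \<kappa>PT j else 0) \<cdot>\<^sub>m 1\<^sub>m (dimH N)"
  shows "commutator (qform N a P Q) (qform N b R T)
       = qform N (\<lambda>j. a j * b j * \<kappa>QR (- j)) P T - qform N (\<lambda>j. a j * b (- j) * \<kappa>QT (- j)) P R
       + qform N (\<lambda>j. a j * b (- j) * \<kappa>PR j) T Q - qform N (\<lambda>j. a j * b j * \<kappa>PT j) R Q"
proof -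
  let ?S = "mode_range N"
  define F1 where "F1 = (\<lambda>(j,k). (if k = j then a j * b j * \<kappa>QR (- j) else 0) \<cdot>\<^sub>m (P j * T (- k)))"
  define F2 where "F2 = (\<lambda>(j,k). (if k = - j then a j * b (- j) * \<kappa>QT (- j) else 0) \<cdot>\<^sub>m (P j * R k))"
  define F3 where "F3 = (\<lambda>(j,k). (if k = - j then a j * b (- j) * \<kappa>PR j else 0) \<cdot>\<^sub>m (T (- k) * Q (- j)))"
  define F4 where "F4 = (\<lambda>(j,k). (if k = j then a j * b j * \<kappa>PT j else 0) \<cdot>\<^sub>m (R k * Q (- j)))"
  have "commutator (qform N a P Q) (qform N b R T)
      = msum N (?S \<times> ?S) (\<lambda>(j,k). (a j * b k) \<cdot>\<^sub>m commutator (P j * Q (- j)) (R k * T (- k)))"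
    unfolding qform_def using c by (intro commutator_msum) auto
  also have "\<dots> = msum N (?S \<times> ?S) (\<lambda>p. F1 p - F2 p + F3 p - F4 p)"
    by (rule msum_cong)
       (auto simp: F1_def F2_def F3_def F4_def commutator_qform_term[where N=N, OF c h])
  also have "\<dots> = msum N (?S \<times> ?S) F1 - msum N (?S \<times> ?S) F2 + msum N (?S \<times> ?S) F3 - msum N (?S \<times> ?S) F4"
    using c by (intro msum_alternating4) (auto simp: F1_def F2_def F3_def F4_def)
  also have "msum N (?S \<times> ?S) F1 = qform N (\<lambda>j. a j * b j * \<kappa>QR (- j)) P T"
    unfolding F1_def qform_def using c
    by (subst msum_collapse[where s="\<lambda>j. j" and M="\<lambda>j k. P j * T (- k)"]) auto
  also have "msum N (?S \<times> ?S) F2 = qform N (\<lambda>j. a j * b (- j) * \<kappa>QT (- j)) P R"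
    unfolding F2_def qform_def using c
    by (subst msum_collapse[where s=uminus and M="\<lambda>j k. P j * R k"]) (auto simp: mode_range_neg)
  also have "msum N (?S \<times> ?S) F3 = qform N (\<lambda>j. a j * b (- j) * \<kappa>PR j) T Q"
    unfolding F3_def qform_def using c
    by (subst msum_collapse[where s=uminus and M="\<lambda>j k. T (- k) * Q (- j)"]) (auto simp: mode_range_neg)
  also have "msum N (?S \<times> ?S) F4 = qform N (\<lambda>j. a j * b j * \<kappa>PT j) R Q"
    unfolding F4_def qform_def using c
    by (subst msum_collapse[where s="\<lambda>j. j" and M="\<lambda>j k. R k * Q (- j)"]) auto
  finally show ?thesis .
qed

section \<open>Commutators of quadratic forms in the eta modes\<close>

(* For coefficient functions a, b put d(j) = j a(j) (b(j) - b(-j)).  The five commutators needed for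
   the theorem are quadratic forms with coefficient +-d; in the names, p and m stand for the
   families eta^+ and eta^-, e.g. pm is sum_j a_j eta^+_j eta^-_{-j}. *)
lemma commutator_pm_pp:
  assumes N: "even N" "2 \<le> N"
  shows "commutator (qform N a (eta_p N) (eta_m N)) (qform N b (eta_p N) (eta_p N))
       = qform N (\<lambda>j. of_int j * (a j * (b j - b (- j)))) (eta_p N) (eta_p N)"
  by (subst commutator_qform[where \<kappa>QR="\<lambda>j. - of_int j" and \<kappa>QT="\<lambda>j. - of_int j"
        and \<kappa>PR="\<lambda>j. 0" and \<kappa>PT="\<lambda>j. 0"])
     (auto simp: eta_p_anticomm eta_m_eta_p_anticomm[OF N] qform_diff minus_carrier_mat
       intro!: qform_cong, simp_all add: algebra_simps)

lemma commutator_mp_pp: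
  assumes N: "even N" "2 \<le> N"
  shows "commutator (qform N a (eta_m N) (eta_p N)) (qform N b (eta_p N) (eta_p N))
       = qform N (\<lambda>j. of_int j * (a j * (b j - b (- j)))) (eta_p N) (eta_p N)"
  by (subst commutator_qform[where \<kappa>QR="\<lambda>j. 0" and \<kappa>QT="\<lambda>j. 0"
        and \<kappa>PR="\<lambda>j. - of_int j" and \<kappa>PT="\<lambda>j. - of_int j"])
     (auto simp: eta_p_anticomm eta_m_eta_p_anticomm[OF N] qform_diff minus_carrier_mat
       intro!: qform_cong, simp_all add: algebra_simps)

lemma commutator_pm_mm:
  assumes N: "even N" "2 \<le> N"
  shows "commutator (qform N a (eta_p N) (eta_m N)) (qform N b (eta_m N) (eta_m N))
       = qform N (\<lambda>j. - (of_int j * (a j * (b j - b (- j))))) (eta_m N) (eta_m N)"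
  by (subst commutator_qform[where \<kappa>QR="\<lambda>j. 0" and \<kappa>QT="\<lambda>j. 0"
        and \<kappa>PR="\<lambda>j. of_int j" and \<kappa>PT="\<lambda>j. of_int j"])
     (auto simp: eta_m_anticomm eta_p_eta_m_anticomm[OF N] qform_diff minus_carrier_mat
       intro!: qform_cong, simp_all add: algebra_simps)

lemma commutator_mp_mm:
  assumes N: "even N" "2 \<le> N"
  shows "commutator (qform N a (eta_m N) (eta_p N)) (qform N b (eta_m N) (eta_m N))
       = qform N (\<lambda>j. - (of_int j * (a j * (b j - b (- j))))) (eta_m N) (eta_m N)"
  by (subst commutator_qform[where \<kappa>QR="\<lambda>j. of_int j" and \<kappa>QT="\<lambda>j. of_int j"
        and \<kappa>PR="\<lambda>j. 0" and \<kappa>PT="\<lambda>j. 0"])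
     (auto simp: eta_m_anticomm eta_p_eta_m_anticomm[OF N] qform_diff minus_carrier_mat
       intro!: qform_cong, simp_all add: algebra_simps)

lemma commutator_pp_mm:
  assumes N: "even N" "2 \<le> N"
  shows "commutator (qform N a (eta_p N) (eta_p N)) (qform N b (eta_m N) (eta_m N))
       = qform N (\<lambda>j. - (of_int j * (a j * (b j - b (- j))))) (eta_p N) (eta_m N)
       + qform N (\<lambda>j. - (of_int j * (a j * (b j - b (- j))))) (eta_m N) (eta_p N)"
proof -
  have "commutator (qform N a (eta_p N) (eta_p N)) (qform N b (eta_m N) (eta_m N))
      = (qform N (\<lambda>j. a j * b j * of_int (- j)) (eta_p N) (eta_m N)
         - qform N (\<lambda>j. a j * b (- j) * of_int (- j)) (eta_p N) (eta_m N))
      + (qform N (\<lambda>j. a j * b (- j) * of_int j) (eta_m N) (eta_p N)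
         - qform N (\<lambda>j. a j * b j * of_int j) (eta_m N) (eta_p N))"
    by (subst commutator_qform[where \<kappa>QR="\<lambda>j. of_int j" and \<kappa>QT="\<lambda>j. of_int j"
          and \<kappa>PR="\<lambda>j. of_int j" and \<kappa>PT="\<lambda>j. of_int j"])
       (auto simp: eta_p_eta_m_anticomm[OF N] minus_carrier_mat add_diff_assoc_mat[where n="dimH N" and m="dimH N"])
  then show ?thesis
    by (simp add: qform_diff del: of_int_minus) (auto intro!: arg_cong2[where f="(+)"] qform_cong
        simp: algebra_simps)
qed

section \<open>The operators W as quadratic forms on the diagonal j2 = -j1\<close>

(* The weight w_r(j) = S(j,-j) U_r(j,-j) = 2 sinc(j) sin(pi j/N) cos^r(pi j/N). *)
definition wcoef :: "nat \<Rightarrow> nat \<Rightarrow> int \<Rightarrow> complex" where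
  "wcoef N r j = complex_of_real
     (2 * sinc_fac N j * sin (pi * real_of_int j / real N) * cos (pi * real_of_int j / real N) ^ r)"

lemma wcoef_odd: "wcoef N r (- j) = - wcoef N r j"
  by (simp add: wcoef_def sinc_fac_neg)

(* The key identity j w_r(j) w_s(j) = 2 (w_{r+s}(j) - w_{r+s+2}(j)), from j sinc(j) = sin(pi j/N)
   and sin^2 = 1 - cos^2. *)
lemma wcoef_product:
  "of_int j * wcoef N r j * wcoef N s j = 2 * (wcoef N (r + s) j - wcoef N (r + s + 2) j)"
proof -
  define F where "F = sinc_fac N j"
  define S where "S = sin (pi * real_of_int j / real N)"
  define C where "C = cos (pi * real_of_int j / real N)"
  have jF: "real_of_int j * F = S" by (cases "j = 0") (auto simp: F_def S_def sinc_fac_def)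
  have "real_of_int j * (2 * F * S * C ^ r) * (2 * F * S * C ^ s) = 4 * F * S * C^(r+s) * S^2"
    by (simp add: jF[symmetric] power_add power2_eq_square mult_ac)
  also have "S^2 = 1 - C^2" by (simp add: S_def C_def sin_squared_eq)
  also have "4 * F * S * C^(r+s) * (1 - C^2) = 2 * (2 * F * S * C ^ (r + s) - 2 * F * S * C ^ (r + s + 2))"
    by (simp add: power_add power2_eq_square algebra_simps)
  finally have "real_of_int j * (2 * F * S * C ^ r) * (2 * F * S * C ^ s)
      = 2 * (2 * F * S * C ^ (r + s) - 2 * F * S * C ^ (r + s + 2))" .
  from arg_cong[OF this, of complex_of_real] show ?thesis
    by (simp add: wcoef_def F_def[symmetric] S_def[symmetric] C_def[symmetric])
qed

(* Since |j1 - j2| < N on the mode range, only the term j1 + j2 = 0 of U_r survives. *)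
lemma Sfac_Ucoef_diag:
  assumes N: "even N" "2 \<le> N" and r: "even r" and jj: "j1 \<in> mode_range N" "j2 \<in> mode_range N"
  shows "complex_of_real (Sfac N j1 j2 * Ucoef N r j1 j2) = (if j2 = - j1 then wcoef N r j1 else 0)"
proof -
  have nN: "j1 - j2 \<noteq> - int N" using jj N by (auto simp: mode_range_iff)
  show ?thesis
  proof (cases "j2 = - j1")
    case True
    have pos: "0 < sinc_fac N j1" using jj N by (intro sinc_fac_pos) (auto simp: mode_range_iff)
    have "Sfac N j1 j2 = sinc_fac N j1"
      using True pos by (simp add: Sfac_def sinc_fac_neg)
    moreover have "pi * real_of_int (j1 - j2) / (2 * real N) = pi * real_of_int j1 / real N"
      using True by (simp add: field_simps)
    ultimately show ?thesis using True nN r by (simp add: Ucoef_def wcoef_def mult_ac)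
  next
    case False
    then show ?thesis using nN by (simp add: Ucoef_def)
  qed
qed

lemma msum_W_collapse:
  assumes "even N" "2 \<le> N" "even r" "\<And>j. X j \<in> Ops N" "\<And>j. Y j \<in> Ops N"
  shows "msum N (mode_range N \<times> mode_range N)
     (\<lambda>(j1, j2). complex_of_real (Sfac N j1 j2 * Ucoef N r j1 j2) \<cdot>\<^sub>m (X j1 * Y j2))
   = qform N (wcoef N r) X Y"
proof -
  have "msum N (mode_range N \<times> mode_range N)
      (\<lambda>(j1, j2). complex_of_real (Sfac N j1 j2 * Ucoef N r j1 j2) \<cdot>\<^sub>m (X j1 * Y j2))
    = msum N (mode_range N \<times> mode_range N)
      (\<lambda>(j1, j2). (if j2 = - j1 then wcoef N r j1 else 0) \<cdot>\<^sub>m (X j1 * Y j2))"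
    using assms(1-3) by (intro msum_cong) (auto simp: Sfac_Ucoef_diag simp del: of_real_mult)
  also have "\<dots> = qform N (wcoef N r) X Y"
    unfolding qform_def using assms(4,5)
    by (subst msum_collapse[where s=uminus and M="\<lambda>j k. X j * Y k"]) (auto simp: mode_range_neg)
  finally show ?thesis .
qed

lemma W_plus_qform:
  "even N \<Longrightarrow> 2 \<le> N \<Longrightarrow> even r \<Longrightarrow> W_plus N r = qform N (wcoef N r) (eta_p N) (eta_p N)"
  unfolding W_plus_def by (rule msum_W_collapse) auto

lemma W_minus_qform:
  "even N \<Longrightarrow> 2 \<le> N \<Longrightarrow> even r \<Longrightarrow> W_minus N r = qform N (wcoef N r) (eta_m N) (eta_m N)"
  unfolding W_minus_def by (rule msum_W_collapse) auto

lemma W_zero_qform: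
  assumes "even N" "2 \<le> N" "even r"
  shows "W_zero N r = qform N (wcoef N r) (eta_p N) (eta_m N) + qform N (wcoef N r) (eta_m N) (eta_p N)"
proof -
  have "W_zero N r = msum N (mode_range N \<times> mode_range N)
      (\<lambda>(j1, j2). complex_of_real (Sfac N j1 j2 * Ucoef N r j1 j2) \<cdot>\<^sub>m (eta_p N j1 * eta_m N j2))
    + msum N (mode_range N \<times> mode_range N)
      (\<lambda>(j1, j2). complex_of_real (Sfac N j1 j2 * Ucoef N r j1 j2) \<cdot>\<^sub>m (eta_m N j1 * eta_p N j2))"
    unfolding W_zero_def
    by (subst msum_add) (auto intro!: msum_cong
        simp: add_smult_distrib_left_mat[where nr="dimH N" and nc="dimH N"])
  then show ?thesis
    using assms msum_W_collapse[of N r "eta_p N" "eta_m N"] msum_W_collapse[of N r "eta_m N" "eta_p N"]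
    by simp
qed

(* The coefficient d(j) of the commutators of eta quadratic forms, for a = w_r and b = w_s:
   by oddness of w_s, d(j) = 2 j w_r(j) w_s(j) = 4 (w_{r+s}(j) - w_{r+s+2}(j)). *)
lemma wcoef_commutator_coeff:
  "of_int j * (wcoef N r j * (wcoef N s j - wcoef N s (- j))) = 4 * (wcoef N (r + s) j - wcoef N (r + s + 2) j)"
proof -
  have "of_int j * (wcoef N r j * (wcoef N s j - wcoef N s (- j))) = 2 * (of_int j * wcoef N r j * wcoef N s j)"
    by (simp add: wcoef_odd algebra_simps)
  then show ?thesis by (simp add: wcoef_product)
qed

lemma commutator_W_zero_W_plus:
  assumes N: "even N" "2 \<le> N" and rs: "even r" "even s"
  shows "commutator (W_zero N r) (W_plus N s) = (-8) \<cdot>\<^sub>m W_plus N (r + s + 2) + 8 \<cdot>\<^sub>m W_plus N (r + s)"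
proof -
  have "commutator (W_zero N r) (W_plus N s)
      = qform N (\<lambda>j. 2 * (of_int j * (wcoef N r j * (wcoef N s j - wcoef N s (- j))))) (eta_p N) (eta_p N)"
    unfolding W_zero_qform[OF N rs(1)] W_plus_qform[OF N rs(2)]
    by (simp add: commutator_add_left[where N=N] commutator_pm_pp[OF N] commutator_mp_pp[OF N] qform_add)
  also have "\<dots> = qform N (\<lambda>j. -8 * wcoef N (r + s + 2) j + 8 * wcoef N (r + s) j) (eta_p N) (eta_p N)"
    by (rule qform_cong) (simp only: wcoef_commutator_coeff, simp add: algebra_simps)
  also have "\<dots> = (-8) \<cdot>\<^sub>m W_plus N (r + s + 2) + 8 \<cdot>\<^sub>m W_plus N (r + s)"
    using rs by (simp add: W_plus_qform[OF N] qform_smult qform_add)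
  finally show ?thesis .
qed

lemma commutator_W_zero_W_minus:
  assumes N: "even N" "2 \<le> N" and rs: "even r" "even s"
  shows "commutator (W_zero N r) (W_minus N s) = 8 \<cdot>\<^sub>m W_minus N (r + s + 2) + (-8) \<cdot>\<^sub>m W_minus N (r + s)"
proof -
  have "commutator (W_zero N r) (W_minus N s)
      = qform N (\<lambda>j. - 2 * (of_int j * (wcoef N r j * (wcoef N s j - wcoef N s (- j))))) (eta_m N) (eta_m N)"
    unfolding W_zero_qform[OF N rs(1)] W_minus_qform[OF N rs(2)]
    by (simp add: commutator_add_left[where N=N] commutator_pm_mm[OF N] commutator_mp_mm[OF N] qform_add)
  also have "\<dots> = qform N (\<lambda>j. 8 * wcoef N (r + s + 2) j + -8 * wcoef N (r + s) j) (eta_m N) (eta_m N)"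
    by (rule qform_cong) (simp only: wcoef_commutator_coeff, simp add: algebra_simps)
  also have "\<dots> = 8 \<cdot>\<^sub>m W_minus N (r + s + 2) + (-8) \<cdot>\<^sub>m W_minus N (r + s)"
    using rs by (simp add: W_minus_qform[OF N] qform_smult qform_add)
  finally show ?thesis .
qed

lemma commutator_W_plus_W_minus:
  assumes N: "even N" "2 \<le> N" and rs: "even r" "even s"
  shows "commutator (W_plus N r) (W_minus N s) = 4 \<cdot>\<^sub>m W_zero N (r + s + 2) + (-4) \<cdot>\<^sub>m W_zero N (r + s)"
proof -
  let ?c = "\<lambda>j. - (of_int j * (wcoef N r j * (wcoef N s j - wcoef N s (- j))))"
  let ?d = "\<lambda>j. 4 * wcoef N (r + s + 2) j + -4 * wcoef N (r + s) j"
  let ?Q = "\<lambda>r X Y. qform N (wcoef N r) X Y"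
  have "commutator (W_plus N r) (W_minus N s) = qform N ?c (eta_p N) (eta_m N) + qform N ?c (eta_m N) (eta_p N)"
    unfolding W_plus_qform[OF N rs(1)] W_minus_qform[OF N rs(2)] by (rule commutator_pp_mm[OF N])
  also have "\<dots> = qform N ?d (eta_p N) (eta_m N) + qform N ?d (eta_m N) (eta_p N)"
    by (intro arg_cong2[where f="(+)"] qform_cong) (simp_all only: wcoef_commutator_coeff, simp_all add: algebra_simps)
  also have "\<dots> = (4 \<cdot>\<^sub>m ?Q (r + s + 2) (eta_p N) (eta_m N) + (-4) \<cdot>\<^sub>m ?Q (r + s) (eta_p N) (eta_m N))
      + (4 \<cdot>\<^sub>m ?Q (r + s + 2) (eta_m N) (eta_p N) + (-4) \<cdot>\<^sub>m ?Q (r + s) (eta_m N) (eta_p N))"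
    by (simp add: qform_smult qform_add)
  also have "\<dots> = 4 \<cdot>\<^sub>m W_zero N (r + s + 2) + (-4) \<cdot>\<^sub>m W_zero N (r + s)"
  proof -
    have ev: "even (r + s + 2)" "even (r + s)" using rs by auto
    show ?thesis unfolding W_zero_qform[OF N ev(1)] W_zero_qform[OF N ev(2)]
      by (intro eq_matI) (auto simp: algebra_simps)
  qed
  finally show ?thesis .
qed

theorem mainTheorem7:
  fixes N r s :: nat
  assumes "even N" and "N \<ge> 2" and "even r" and "even s"
  shows "commutator (W_zero N r) (W_plus N s)
           = (-8) \<cdot>\<^sub>m W_plus N (r + s + 2) + 8 \<cdot>\<^sub>m W_plus N (r + s)
       \<and> commutator (W_zero N r) (W_minus N s)
           = 8 \<cdot>\<^sub>m W_minus N (r + s + 2) + (-8) \<cdot>\<^sub>m W_minus N (r + s)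
       \<and> commutator (W_plus N r) (W_minus N s)
           = 4 \<cdot>\<^sub>m W_zero N (r + s + 2) + (-4) \<cdot>\<^sub>m W_zero N (r + s)"
  using commutator_W_zero_W_plus[OF assms] commutator_W_zero_W_minus[OF assms]
    commutator_W_plus_W_minus[OF assms] by blast

end
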